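(* For any rooted tree-structure $\varphi$, the $R$-linear map $\rho:\mathcal{T}(\varphi)\to\mathcal{T}(\varphi)\otimes\mathcal{T}(\varphi)$ defined on generators by $$\rho(T,s)=\sum_{e\in\operatorname{edg}(T)}(T^1_e,s|_{T^1_e})\otimes(T^2_e,s|_{T^2_e})$$ is a pre-Lie comultiplication.
   Context: $R$ is a commutative ring with unit. A pre-Lie comultiplication on an $R$-module $A$ is an $R$-linear $\rho:A\to A\otimes A$ with $(\mathrm{id}-P^{1,2})\big((\rho\otimes\mathrm{id})\rho-(\mathrm{id}\otimes\rho)\rho\big)=0$, where $P^{1,2}(x\otimes y\otimes z)=y\otimes x\otimes z$. Trees are finite; a rooted tree has a distinguished vertex, the root. A subtree $T'$ of a rooted tree $T$ (a tree formed by some vertices and edges of $T$) is rooted at the unique vertex $v$ of $T'$ such that every path from the root of $T$ to a point of $T'$ passes through $v$. An embedding of rooted trees $j:T'\to T$ is a homeomorphism of $T'$ onto a subtree of $T$ respecting vertices, edges and roots. $RTrees$ is the category of rooted trees and embeddings. A rooted tree-structure is a contravariant functor $\varphi$ from $RTrees$ to sets. A rooted $\varphi$-tree is a pair $(T,s)$ with $s\in\varphi(T)$; $(T,s)$ and $(\tilde T,\tilde s)$ are homeomorphic if there is a homeomorphism $j:T\to\tilde T$ with $\varphi(j)(\tilde s)=s$. For a subtree $T'\subset T$, $s|_{T'}=\varphi(\iota)(s)$ with $\iota$ the inclusion. $\mathcal{T}(\varphi)$ is the free $R$-module on homeomorphism classes of rooted $\varphi$-trees. For an edge $e$ of $T$,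 removing the interior of $e$ leaves two subtrees $T^1_e,T^2_e$, with $T^2_e$ containing the root of $T$ (rooted there) and $T^1_e$ rooted at its vertex adjacent to $e$; $\operatorname{edg}(T)$ is the edge set. *)

theory Defs
  imports Main "HOL-Library.Function_Algebras"
begin

text \<open>Vertices are taken in nat; every finite tree is isomorphic to one
of these, so the category of such trees is equivalent to RTrees.\<close>

type_synonym rtree = "nat set \<times> nat set set \<times> nat"

definition verts :: "rtree \<Rightarrow> nat set" where "verts T = fst T"
definition edges :: "rtree \<Rightarrow> nat set set" where "edges T = fst (snd T)"
definition root :: "rtree \<Rightarrow> nat" where "root T = snd (snd T)"

definition adj :: "nat set set \<Rightarrow> (nat \<times> nat) set" where
  "adj E = {(u, v). {u, v} \<in> E}"

definition is_path :: "nat set set \<Rightarrow> nat list \<Rightarrow> bool" where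
  "is_path E xs \<longleftrightarrow> xs \<noteq> [] \<and> distinct xs \<and>
     (\<forall>i. Suc i < length xs \<longrightarrow> {xs ! i, xs ! Suc i} \<in> E)"

definition has_cycle :: "nat set set \<Rightarrow> bool" where
  "has_cycle E \<longleftrightarrow> (\<exists>xs. length xs \<ge> 3 \<and> is_path E xs \<and> {last xs, hd xs} \<in> E)"

definition is_tree :: "nat set \<Rightarrow> nat set set \<Rightarrow> bool" where
  "is_tree V E \<longleftrightarrow> finite V \<and> V \<noteq> {} \<and>
     (\<forall>e\<in>E. \<exists>u v. e = {u, v} \<and> u \<noteq> v \<and> u \<in> V \<and> v \<in> V) \<and>
     (\<forall>u\<in>V. \<forall>v\<in>V. (u, v) \<in> (adj E)\<^sup>*) \<and>
     \<not> has_cycle E"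

definition is_rtree :: "rtree \<Rightarrow> bool" where
  "is_rtree T \<longleftrightarrow> is_tree (verts T) (edges T) \<and> root T \<in> verts T"

definition subroot :: "rtree \<Rightarrow> nat set \<Rightarrow> nat" where
  "subroot T V' = (THE v. v \<in> V' \<and> (\<forall>w\<in>V'. \<forall>xs. is_path (edges T) xs \<and> hd xs = root T
        \<and> last xs = w \<longrightarrow> v \<in> set xs))"

definition img_edges :: "(nat \<Rightarrow> nat) \<Rightarrow> nat set set \<Rightarrow> nat set set" where
  "img_edges f E = (\<lambda>e. f ` e) ` E"

definition embedding :: "rtree \<Rightarrow> rtree \<Rightarrow> (nat \<Rightarrow> nat) \<Rightarrow> bool" where
  "embedding T' T f \<longleftrightarrow> is_rtree T' \<and> is_rtree T \<and> inj_on f (verts T') \<and>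
     f ` verts T' \<subseteq> verts T \<and> img_edges f (edges T') \<subseteq> edges T \<and>
     f (root T') = subroot T (f ` verts T')"

definition rhomeo :: "rtree \<Rightarrow> rtree \<Rightarrow> (nat \<Rightarrow> nat) \<Rightarrow> bool" where
  "rhomeo T T2 f \<longleftrightarrow> is_rtree T \<and> is_rtree T2 \<and> bij_betw f (verts T) (verts T2) \<and>
     img_edges f (edges T) = edges T2 \<and> f (root T) = root T2"

text \<open>A contravariant functor from RTrees to sets: object part phi, morphism part
phimap T' T f (for an embedding f : T' \<rightarrow> T) mapping phi T to phi T'.
Morphisms are determined by their vertex maps.\<close>
definition rtree_structure ::
  "(rtree \<Rightarrow> 'a set) \<Rightarrow> (rtree \<Rightarrow> rtree \<Rightarrow> (nat \<Rightarrow> nat) \<Rightarrow> 'a \<Rightarrow> 'a) \<Rightarrow> bool" where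
  "rtree_structure phi phimap \<longleftrightarrow>
     (\<forall>T' T f s. embedding T' T f \<and> s \<in> phi T \<longrightarrow> phimap T' T f s \<in> phi T') \<and>
     (\<forall>T' T f g s. embedding T' T f \<and> (\<forall>v\<in>verts T'. f v = g v) \<and> s \<in> phi T
        \<longrightarrow> phimap T' T f s = phimap T' T g s) \<and>
     (\<forall>T s. is_rtree T \<and> s \<in> phi T \<longrightarrow> phimap T T id s = s) \<and>
     (\<forall>T1 T2 T3 f g s. embedding T1 T2 f \<and> embedding T2 T3 g \<and> s \<in> phi T3 \<longrightarrow>
        phimap T1 T3 (g \<circ> f) s = phimap T1 T2 f (phimap T2 T3 g s))"

definition restr :: "(rtree \<Rightarrow> rtree \<Rightarrow> (nat \<Rightarrow> nat) \<Rightarrow> 'a \<Rightarrow> 'a) \<Rightarrow> rtree \<Rightarrow> rtree \<Rightarrow> 'a \<Rightarrow> 'a" where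
  "restr phimap T T' s = phimap T' T id s"

definition rclass :: "(rtree \<Rightarrow> 'a set) \<Rightarrow> (rtree \<Rightarrow> rtree \<Rightarrow> (nat \<Rightarrow> nat) \<Rightarrow> 'a \<Rightarrow> 'a)
    \<Rightarrow> rtree \<Rightarrow> 'a \<Rightarrow> (rtree \<times> 'a) set" where
  "rclass phi phimap T s = {(T2, s2). s2 \<in> phi T2 \<and> (\<exists>j. rhomeo T T2 j \<and> phimap T T2 j s2 = s)}"

definition rclasses :: "(rtree \<Rightarrow> 'a set) \<Rightarrow> (rtree \<Rightarrow> rtree \<Rightarrow> (nat \<Rightarrow> nat) \<Rightarrow> 'a \<Rightarrow> 'a)
    \<Rightarrow> (rtree \<times> 'a) set set" where
  "rclasses phi phimap = {rclass phi phimap T s | T s. is_rtree T \<and> s \<in> phi T}"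

text \<open>T^2_e: the component of T minus the interior of e containing the root (rooted
there); T^1_e: the other component, rooted at its endpoint of e.\<close>
definition cut_verts2 :: "rtree \<Rightarrow> nat set \<Rightarrow> nat set" where
  "cut_verts2 T e = {w \<in> verts T. (root T, w) \<in> (adj (edges T - {e}))\<^sup>*}"

definition cut_verts1 :: "rtree \<Rightarrow> nat set \<Rightarrow> nat set" where
  "cut_verts1 T e = verts T - cut_verts2 T e"

definition cut_tree2 :: "rtree \<Rightarrow> nat set \<Rightarrow> rtree" where
  "cut_tree2 T e = (cut_verts2 T e, {e' \<in> edges T - {e}. e' \<subseteq> cut_verts2 T e}, root T)"

definition cut_tree1 :: "rtree \<Rightarrow> nat set \<Rightarrow> rtree" where
  "cut_tree1 T e = (cut_verts1 T e, {e' \<in> edges T - {e}. e' \<subseteq> cut_verts1 T e},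
                    THE v. v \<in> e \<and> v \<in> cut_verts1 T e)"

text \<open>The free R-module on a basis B is modelled as the finitely supported functions
B \<Rightarrow> R; the tensor product of free modules on B and C is identified with the free
module on B \<times> C (basis element (b, c) = b \<otimes> c).\<close>

definition free_mod :: "'b set \<Rightarrow> ('b \<Rightarrow> 'r::zero) set" where
  "free_mod B = {x. finite {b. x b \<noteq> 0} \<and> {b. x b \<noteq> 0} \<subseteq> B}"

definition delta :: "'b \<Rightarrow> 'b \<Rightarrow> 'r::{zero,one}" where
  "delta b = (\<lambda>b'. if b' = b then 1 else 0)"

definition lin :: "('b \<Rightarrow> 'c \<Rightarrow> 'r::comm_ring_1) \<Rightarrow> ('b \<Rightarrow> 'r) \<Rightarrow> 'c \<Rightarrow> 'r" where
  "lin f x = (\<lambda>c. \<Sum>b\<in>{b. x b \<noteq> 0}. x b * f b c)"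

definition tens_left :: "(('b \<Rightarrow> 'r) \<Rightarrow> ('b \<times> 'b \<Rightarrow> 'r)) \<Rightarrow> ('b \<times> 'b \<Rightarrow> 'r::comm_ring_1)
    \<Rightarrow> ('b \<times> 'b \<times> 'b \<Rightarrow> 'r)" where
  "tens_left rho = lin (\<lambda>(c, d). lin (\<lambda>(c1, c2). delta (c1, c2, d)) (rho (delta c)))"

definition tens_right :: "(('b \<Rightarrow> 'r) \<Rightarrow> ('b \<times> 'b \<Rightarrow> 'r)) \<Rightarrow> ('b \<times> 'b \<Rightarrow> 'r::comm_ring_1)
    \<Rightarrow> ('b \<times> 'b \<times> 'b \<Rightarrow> 'r)" where
  "tens_right rho = lin (\<lambda>(c, d). lin (\<lambda>(d1, d2). delta (c, d1, d2)) (rho (delta d)))"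

definition P12 :: "('b \<times> 'b \<times> 'b \<Rightarrow> 'r::comm_ring_1) \<Rightarrow> ('b \<times> 'b \<times> 'b \<Rightarrow> 'r)" where
  "P12 = lin (\<lambda>(a, b, c). delta (b, a, c))"

definition pre_lie_comult :: "'b set \<Rightarrow> (('b \<Rightarrow> 'r) \<Rightarrow> ('b \<times> 'b \<Rightarrow> 'r::comm_ring_1)) \<Rightarrow> bool" where
  "pre_lie_comult B rho \<longleftrightarrow>
     (\<forall>x\<in>free_mod B. \<forall>y\<in>free_mod B. \<forall>a b. rho (\<lambda>i. a * x i + b * y i) = (\<lambda>p. a * rho x p + b * rho y p)) \<and>
     (\<forall>x\<in>free_mod B. rho x \<in> free_mod (B \<times> B)) \<and>
     (\<forall>x\<in>free_mod B. let z = tens_left rho (rho x) - tens_right rho (rho x) in z - P12 z = 0)"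

definition rho_gen :: "(rtree \<Rightarrow> 'a set) \<Rightarrow> (rtree \<Rightarrow> rtree \<Rightarrow> (nat \<Rightarrow> nat) \<Rightarrow> 'a \<Rightarrow> 'a)
    \<Rightarrow> rtree \<Rightarrow> 'a \<Rightarrow> ((rtree \<times> 'a) set \<times> (rtree \<times> 'a) set \<Rightarrow> 'r::comm_ring_1)" where
  "rho_gen phi phimap T s =
     (\<Sum>e\<in>edges T. delta (rclass phi phimap (cut_tree1 T e) (restr phimap T (cut_tree1 T e) s),
                          rclass phi phimap (cut_tree2 T e) (restr phimap T (cut_tree2 T e) s)))"

text \<open>Linear extension, using an (arbitrary) representative of each class.\<close>
definition rho_tree :: "(rtree \<Rightarrow> 'a set) \<Rightarrow> (rtree \<Rightarrow> rtree \<Rightarrow> (nat \<Rightarrow> nat) \<Rightarrow> 'a \<Rightarrow> 'a)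
    \<Rightarrow> ((rtree \<times> 'a) set \<Rightarrow> 'r) \<Rightarrow> ((rtree \<times> 'a) set \<times> (rtree \<times> 'a) set \<Rightarrow> 'r::comm_ring_1)" where
  "rho_tree phi phimap = lin (\<lambda>C. case (SOME p. p \<in> C) of (T, s) \<Rightarrow> rho_gen phi phimap T s)"

end

theory Submission
  imports Defs
begin

text \<open>
  Cutting two distinct edges e, f of a tree T leaves three pieces, whatever the order of the
  cuts. The terms of (\<rho> \<otimes> id) \<rho> T are indexed by pairs (e, f) with f in the branch below e
  and read (branch of f) \<otimes> (piece between f and e) \<otimes> (trunk of e). The terms of
  (id \<otimes> \<rho>) \<rho> T are indexed by pairs (e, f) with f in the trunk of e: when e lies below f
  this is the term of (f, e) above, and otherwise e and f are incomparable and the term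
  (branch of e) \<otimes> (branch of f) \<otimes> (rest) is mapped by P12 to the term of (f, e). Hence the
  coassociator is minus a P12-invariant sum. That \<rho> is well defined on homeomorphism classes
  holds because homeomorphisms commute with cutting edges.
\<close>

lemma adj_commute: "(u, v) \<in> adj F \<longleftrightarrow> (v, u) \<in> adj F"
  by (auto simp: adj_def insert_commute)

lemma adjI: "{u, v} \<in> F \<Longrightarrow> (u, v) \<in> adj F"
  by (simp add: adj_def)

lemma adjD: "(u, v) \<in> adj F \<Longrightarrow> {u, v} \<in> F"
  by (simp add: adj_def)

lemma adj_rtrancl_sym: "(u, v) \<in> (adj F)\<^sup>* \<Longrightarrow> (v, u) \<in> (adj F)\<^sup>*"
proof -
  have "(adj F)\<inverse> = adj F" using adj_commute by auto
  then show "(u, v) \<in> (adj F)\<^sup>* \<Longrightarrow> (v, u) \<in> (adj F)\<^sup>*" by (metis rtrancl_converseI)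
qed

lemma adj_rtrancl_mono: "F \<subseteq> G \<Longrightarrow> (u, v) \<in> (adj F)\<^sup>* \<Longrightarrow> (u, v) \<in> (adj G)\<^sup>*"
proof -
  assume "F \<subseteq> G"
  then have "adj F \<subseteq> adj G" by (auto simp: adj_def)
  then show "(u, v) \<in> (adj F)\<^sup>* \<Longrightarrow> (u, v) \<in> (adj G)\<^sup>*" using rtrancl_mono by blast
qed

lemma is_path_mono: "F \<subseteq> G \<Longrightarrow> is_path F xs \<Longrightarrow> is_path G xs"
  by (auto simp: is_path_def)

lemma has_cycle_mono: "F \<subseteq> G \<Longrightarrow> has_cycle F \<Longrightarrow> has_cycle G"
  unfolding has_cycle_def using is_path_mono by blast

lemma is_path_singleton: "is_path F [x]"
  by (simp add: is_path_def)

lemma is_path_ConsD: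
  assumes "is_path F (x # y # ys)"
  shows "{x, y} \<in> F" "is_path F (y # ys)"
proof -
  have adj: "\<And>i. Suc i < length (x # y # ys) \<Longrightarrow> {(x # y # ys) ! i, (x # y # ys) ! Suc i} \<in> F"
    using assms by (simp add: is_path_def)
  show "{x, y} \<in> F" using adj[of 0] by simp
  show "is_path F (y # ys)" unfolding is_path_def
  proof (intro conjI allI impI)
    fix i assume "Suc i < length (y # ys)"
    then show "{(y # ys) ! i, (y # ys) ! Suc i} \<in> F" using adj[of "Suc i"] by simp
  qed (use assms in \<open>auto simp: is_path_def\<close>)
qed

lemma is_path_take: "is_path F xs \<Longrightarrow> is_path F (take (Suc i) xs)"
  by (auto simp: is_path_def distinct_take)

lemma is_path_snoc:
  assumes "is_path F xs" "z \<notin> set xs" "{last xs, z} \<in> F"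
  shows "is_path F (xs @ [z])"
  unfolding is_path_def
proof (intro conjI allI impI)
  show "distinct (xs @ [z])" using assms(1,2) by (simp add: is_path_def)
  fix i assume i: "Suc i < length (xs @ [z])"
  show "{(xs @ [z]) ! i, (xs @ [z]) ! Suc i} \<in> F"
  proof (cases "Suc i < length xs")
    case True
    then show ?thesis using assms(1) by (simp add: is_path_def nth_append)
  next
    case False
    then have "i = length xs - 1" "xs \<noteq> []" using i assms(1) by (auto simp: is_path_def)
    then show ?thesis using assms(3) by (auto simp: nth_append last_conv_nth)
  qed
qed simp

lemma adj_rtrancl_path:
  assumes "(u, v) \<in> (adj F)\<^sup>*"
  shows "\<exists>xs. is_path F xs \<and> hd xs = u \<and> last xs = v \<and> (\<forall>z\<in>set xs. (u, z) \<in> (adj F)\<^sup>*)"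
  using assms
proof (induction rule: rtrancl_induct)
  case base
  show ?case using is_path_singleton by fastforce
next
  case (step y z)
  then obtain xs where xs: "is_path F xs" "hd xs = u" "last xs = y"
    "\<forall>z\<in>set xs. (u, z) \<in> (adj F)\<^sup>*" by blast
  have ne: "xs \<noteq> []" using xs(1) by (simp add: is_path_def)
  show ?case
  proof (cases "z \<in> set xs")
    case True
    then obtain i where i: "i < length xs" "xs ! i = z" by (metis in_set_conv_nth)
    have "last (take (Suc i) xs) = z" using i by (simp add: take_Suc_conv_app_nth)
    then show ?thesis using is_path_take[OF xs(1)] xs(2,4) ne
      by (metis hd_take in_set_takeD zero_less_Suc)
  next
    case False
    have "is_path F (xs @ [z])" using is_path_snoc[OF xs(1) False] step(2) xs(3) by (simp add: adj_def)
    then show ?thesis using xs(2,4) ne step.hyps by (intro exI[of _ "xs @ [z]"]) auto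
  qed
qed

lemma rtreeD:
  assumes "is_rtree T"
  shows "finite (verts T)" "root T \<in> verts T"
    "\<And>g. g \<in> edges T \<Longrightarrow> \<exists>u v. g = {u, v} \<and> u \<noteq> v \<and> u \<in> verts T \<and> v \<in> verts T"
    "\<And>u v. u \<in> verts T \<Longrightarrow> v \<in> verts T \<Longrightarrow> (u, v) \<in> (adj (edges T))\<^sup>*"
    "\<not> has_cycle (edges T)"
  using assms by (auto simp: is_rtree_def is_tree_def)

lemma edges_subset_Pow_verts: "is_rtree T \<Longrightarrow> edges T \<subseteq> Pow (verts T)"
  using rtreeD(3) by blast

lemma edge_subset_verts: "is_rtree T \<Longrightarrow> g \<in> edges T \<Longrightarrow> g \<subseteq> verts T"
  using edges_subset_Pow_verts by blast

lemma edge_nonempty: "is_rtree T \<Longrightarrow> g \<in> edges T \<Longrightarrow> g \<noteq> {}"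
  using rtreeD(3) by blast

lemma finite_edges: "is_rtree T \<Longrightarrow> finite (edges T)"
  using edges_subset_Pow_verts rtreeD(1) finite_subset by blast

lemma adj_rtrancl_verts:
  assumes "is_rtree T" "F \<subseteq> edges T" "(x, y) \<in> (adj F)\<^sup>*" "x \<in> verts T"
  shows "y \<in> verts T"
  using assms(3,4)
  by (induction rule: rtrancl_induct) (use assms(1,2) edge_subset_verts adjD in blast)+

lemma subroot_root:
  assumes "is_rtree T" "root T \<in> V'"
  shows "subroot T V' = root T"
  unfolding subroot_def
proof (rule the_equality)
  show "root T \<in> V' \<and> (\<forall>w\<in>V'. \<forall>xs. is_path (edges T) xs \<and> hd xs = root T \<and> last xs = w \<longrightarrow> root T \<in> set xs)"
    using assms by (auto simp: is_path_def) (metis hd_in_set)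
next
  fix v assume "v \<in> V' \<and> (\<forall>w\<in>V'. \<forall>xs. is_path (edges T) xs \<and> hd xs = root T \<and> last xs = w \<longrightarrow> v \<in> set xs)"
  then have "v \<in> set [root T]" using assms(2) is_path_singleton by fastforce
  then show "v = root T" by simp
qed

section \<open>Cutting one edge\<close>

locale edge_cut =
  fixes T :: rtree and e :: "nat set"
  assumes rt: "is_rtree T" and eE: "e \<in> edges T"
begin

abbreviation "V \<equiv> verts T"
abbreviation "E \<equiv> edges T"
abbreviation "r \<equiv> root T"
abbreviation "V2 \<equiv> cut_verts2 T e"
abbreviation "V1 \<equiv> cut_verts1 T e"
abbreviation "child \<equiv> root (cut_tree1 T e)"

lemma V2_subset: "V2 \<subseteq> V" by (auto simp: cut_verts2_def)
lemma root_in_V2: "r \<in> V2" using rtreeD(2)[OF rt] by (auto simp: cut_verts2_def)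
lemma V1_eq: "V1 = V - V2" by (simp add: cut_verts1_def)
lemma V2_iff: "x \<in> V2 \<longleftrightarrow> x \<in> V \<and> (r, x) \<in> (adj (E - {e}))\<^sup>*" by (simp add: cut_verts2_def)

lemma verts_cut_tree2 [simp]: "verts (cut_tree2 T e) = V2" by (simp add: verts_def cut_tree2_def)
lemma edges_cut_tree2 [simp]: "edges (cut_tree2 T e) = {g \<in> E - {e}. g \<subseteq> V2}" by (simp add: edges_def cut_tree2_def)
lemma root_cut_tree2 [simp]: "root (cut_tree2 T e) = r" by (simp add: root_def cut_tree2_def)
lemma verts_cut_tree1 [simp]: "verts (cut_tree1 T e) = V1" by (simp add: verts_def cut_tree1_def)
lemma edges_cut_tree1 [simp]: "edges (cut_tree1 T e) = {g \<in> E - {e}. g \<subseteq> V1}" by (simp add: edges_def cut_tree1_def)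

lemma V2_closed:
  assumes "{x, y} \<in> E" "{x, y} \<noteq> e" "y \<in> V2"
  shows "x \<in> V2"
proof -
  have "x \<in> V" using edge_subset_verts[OF rt assms(1)] by auto
  moreover have "(y, x) \<in> adj (E - {e})" using assms by (simp add: adj_def insert_commute)
  ultimately show ?thesis using assms(3) V2_iff by (meson rtrancl_into_rtrancl)
qed

lemma V1_closed:
  assumes "{x, y} \<in> E" "{x, y} \<noteq> e" "y \<in> V1"
  shows "x \<in> V1"
  using assms V2_closed[of y x] edge_subset_verts[OF rt assms(1)]
  by (auto simp: V1_eq insert_commute)

lemma edge_meets_V2:
  assumes "e = {u, v}" "u \<in> V"
  shows "u \<in> V2 \<or> v \<in> V2"
proof (rule ccontr)
  assume n: "\<not> (u \<in> V2 \<or> v \<in> V2)"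
  have "(r, u) \<in> (adj E)\<^sup>*" using rtreeD(2,4)[OF rt] assms(2) by blast
  then have "u \<in> V2"
  proof (induction rule: rtrancl_induct)
    case base then show ?case using root_in_V2 .
  next
    case (step y z)
    then have "{z, y} \<in> E" by (simp add: adj_def insert_commute)
    moreover have "{z, y} \<noteq> e" using n step.IH assms(1) by auto
    ultimately show ?case using V2_closed step.IH by blast
  qed
  then show False using n by blast
qed

text \<open>Two endpoints of e in V2 would be joined by a path avoiding e, which closes a cycle
  with e.\<close>

lemma edge_not_inside_V2:
  assumes "e = {u, v}" "u \<noteq> v" "u \<in> V2"
  shows "v \<notin> V2"
proof
  assume "v \<in> V2"
  then have "(u, v) \<in> (adj (E - {e}))\<^sup>*"
    using assms(3) V2_iff adj_rtrancl_sym by (meson rtrancl_trans)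
  then obtain xs where xs: "is_path (E - {e}) xs" "hd xs = u" "last xs = v"
    using adj_rtrancl_path by blast
  have "xs \<noteq> []" using xs(1) by (simp add: is_path_def)
  moreover have "xs \<noteq> [x]" for x using xs(2,3) assms(2) by auto
  moreover have "xs \<noteq> [x, y]" for x y
  proof
    assume "xs = [x, y]"
    then have "{x, y} \<in> E - {e}" "{x, y} = e" using xs assms(1) is_path_ConsD(1) by auto
    then show False by blast
  qed
  ultimately have "length xs \<ge> 3" by (cases xs; cases "tl xs"; cases "tl (tl xs)") auto
  moreover have "is_path E xs" using is_path_mono[OF _ xs(1)] by blast
  moreover have "{last xs, hd xs} \<in> E" using xs assms(1) eE by (simp add: insert_commute)
  ultimately have "has_cycle E" unfolding has_cycle_def by blast
  then show False using rtreeD(5)[OF rt] by blast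
qed

lemma edge_crosses_cut: "\<exists>a b. e = {a, b} \<and> a \<noteq> b \<and> a \<in> V2 \<and> b \<in> V1"
proof -
  obtain u v where uv: "e = {u, v}" "u \<noteq> v" "u \<in> V" "v \<in> V" using rtreeD(3)[OF rt eE] by blast
  show ?thesis
  proof (cases "u \<in> V2")
    case True
    then show ?thesis using edge_not_inside_V2[OF uv(1,2)] uv V1_eq by blast
  next
    case False
    then have "v \<in> V2" using edge_meets_V2[OF uv(1,3)] by blast
    moreover have "e = {v, u}" "v \<noteq> u" using uv by (auto simp: insert_commute)
    ultimately show ?thesis using False uv(3) V1_eq by blast
  qed
qed

lemma child_eqI: "b \<in> e \<Longrightarrow> b \<in> V1 \<Longrightarrow> child = b"
proof -
  assume b: "b \<in> e" "b \<in> V1"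
  obtain a b' where ab: "e = {a, b'}" "a \<in> V2" "b' \<in> V1" using edge_crosses_cut by blast
  have unique: "v = b'" if "v \<in> e" "v \<in> V1" for v
  proof -
    have "v \<noteq> a" using that(2) ab(2) by (auto simp: V1_eq)
    then show ?thesis using that(1) ab(1) by blast
  qed
  have "child = (THE v. v \<in> e \<and> v \<in> V1)" by (simp add: cut_tree1_def root_def)
  also have "\<dots> = b'" using ab(1,3) unique by (intro the_equality) blast+
  finally show ?thesis using unique[OF b] by simp
qed

lemma edge_eq_child:
  obtains a where "{a, child} = e" "a \<noteq> child" "a \<in> V2" "child \<in> V1"
proof -
  obtain a b where ab: "e = {a, b}" "a \<noteq> b" "a \<in> V2" "b \<in> V1" using edge_crosses_cut by blast
  then have "child = b" using child_eqI by blast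
  then show ?thesis using ab by (intro that) auto
qed

lemma child_in_V1: "child \<in> V1" by (rule edge_eq_child)
lemma child_in_edge: "child \<in> e" by (rule edge_eq_child) blast
lemma child_notin_V2: "child \<notin> V2" using child_in_V1 by (simp add: V1_eq)

lemma edge_subset_side: "g \<in> E \<Longrightarrow> g \<noteq> e \<Longrightarrow> g \<subseteq> V1 \<or> g \<subseteq> V2"
proof -
  assume g: "g \<in> E" "g \<noteq> e"
  obtain u v where uv: "g = {u, v}" "u \<in> V" "v \<in> V" using rtreeD(3)[OF rt g(1)] by blast
  show ?thesis
  proof (cases "v \<in> V2")
    case True
    then show ?thesis using V2_closed g uv by blast
  next
    case False
    then have "v \<in> V1" using uv by (simp add: V1_eq)
    then show ?thesis using V1_closed g uv by blast
  qed
qed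

lemma V2_connected:
  assumes "w \<in> V2"
  shows "(r, w) \<in> (adj (edges (cut_tree2 T e)))\<^sup>*"
proof -
  have "(r, w) \<in> (adj (E - {e}))\<^sup>*" using assms V2_iff by blast
  then show ?thesis
  proof (induction rule: rtrancl_induct)
    case base then show ?case by simp
  next
    case (step y z)
    have yz: "{y, z} \<in> E - {e}" using step(2) by (simp add: adj_def)
    have "y \<in> V" using adj_rtrancl_verts[OF rt _ step(1) rtreeD(2)[OF rt]] by blast
    then have y: "y \<in> V2" using step(1) V2_iff by blast
    then have "z \<in> V2" using V2_closed[of z y] yz by (simp add: insert_commute)
    then have "(y, z) \<in> adj (edges (cut_tree2 T e))" using yz y by (simp add: adjI)
    then show ?case using step.IH by (meson rtrancl_into_rtrancl)
  qed
qed

text \<open>Every walk from V1 into V2 leaves V1 through child.\<close>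

lemma V1_connected:
  assumes "w \<in> V1"
  shows "(child, w) \<in> (adj (edges (cut_tree1 T e)))\<^sup>*"
proof -
  have "(w, r) \<in> (adj E)\<^sup>*" using rtreeD(2,4)[OF rt] assms by (simp add: V1_eq)
  then show ?thesis using root_in_V2 assms
  proof (induction rule: converse_rtrancl_induct)
    case base then show ?case by (simp add: V1_eq)
  next
    case (step x x')
    have xx': "{x, x'} \<in> E" using step(1) by (simp add: adj_def)
    show ?case
    proof (cases "x' \<in> V1")
      case True
      obtain a where a: "{a, child} = e" "a \<noteq> child" "a \<in> V2" "child \<in> V1" by (rule edge_eq_child)
      then have "{x', x} \<noteq> e" using True step(5) V1_eq by auto
      then have "(x', x) \<in> adj (edges (cut_tree1 T e))"
        using xx' True step(5) by (simp add: adjI insert_commute)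
      then show ?thesis using step.IH[OF step(4) True] by (meson rtrancl_into_rtrancl)
    next
      case False
      then have "x' \<in> V2" using edge_subset_verts[OF rt xx'] V1_eq by auto
      then have "{x, x'} = e" using V2_closed[OF xx'] step(5) V1_eq by auto
      then have "child = x" using child_eqI step(5) by blast
      then show ?thesis by simp
    qed
  qed
qed

lemma is_rtree_cut_tree2: "is_rtree (cut_tree2 T e)"
  unfolding is_rtree_def is_tree_def
proof (intro conjI ballI)
  show "finite (verts (cut_tree2 T e))" using rtreeD(1)[OF rt] V2_subset finite_subset by auto
  show "verts (cut_tree2 T e) \<noteq> {}" "root (cut_tree2 T e) \<in> verts (cut_tree2 T e)"
    using root_in_V2 by auto
  show "\<not> has_cycle (edges (cut_tree2 T e))"
    using has_cycle_mono[of "edges (cut_tree2 T e)" E] rtreeD(5)[OF rt] by auto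
  fix g assume "g \<in> edges (cut_tree2 T e)"
  then show "\<exists>u v. g = {u, v} \<and> u \<noteq> v \<and> u \<in> verts (cut_tree2 T e) \<and> v \<in> verts (cut_tree2 T e)"
    using rtreeD(3)[OF rt] by fastforce
next
  fix u v assume "u \<in> verts (cut_tree2 T e)" "v \<in> verts (cut_tree2 T e)"
  then show "(u, v) \<in> (adj (edges (cut_tree2 T e)))\<^sup>*"
    using V2_connected adj_rtrancl_sym by simp (meson rtrancl_trans)
qed

lemma is_rtree_cut_tree1: "is_rtree (cut_tree1 T e)"
  unfolding is_rtree_def is_tree_def
proof (intro conjI ballI)
  show "finite (verts (cut_tree1 T e))" using rtreeD(1)[OF rt] V1_eq by auto
  show "verts (cut_tree1 T e) \<noteq> {}" "root (cut_tree1 T e) \<in> verts (cut_tree1 T e)"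
    using child_in_V1 by auto
  show "\<not> has_cycle (edges (cut_tree1 T e))"
    using has_cycle_mono[of "edges (cut_tree1 T e)" E] rtreeD(5)[OF rt] by auto
  fix g assume "g \<in> edges (cut_tree1 T e)"
  then show "\<exists>u v. g = {u, v} \<and> u \<noteq> v \<and> u \<in> verts (cut_tree1 T e) \<and> v \<in> verts (cut_tree1 T e)"
    using rtreeD(3)[OF rt] by fastforce
next
  fix u v assume "u \<in> verts (cut_tree1 T e)" "v \<in> verts (cut_tree1 T e)"
  then show "(u, v) \<in> (adj (edges (cut_tree1 T e)))\<^sup>*"
    using V1_connected adj_rtrancl_sym by simp (meson rtrancl_trans)
qed

lemma path_from_V2_to_V1_contains_child:
  "is_path E xs \<Longrightarrow> hd xs \<in> V2 \<Longrightarrow> last xs \<in> V1 \<Longrightarrow> child \<in> set xs"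
proof (induction xs)
  case Nil then show ?case by (simp add: is_path_def)
next
  case (Cons x ys)
  show ?case
  proof (cases ys)
    case Nil then show ?thesis using Cons V1_eq by auto
  next
    case (Cons y zs)
    have p: "{x, y} \<in> E" "is_path E ys" using is_path_ConsD Cons \<open>is_path E (x # ys)\<close> by auto
    show ?thesis
    proof (cases "y \<in> V2")
      case True
      then show ?thesis using Cons.IH p(2) Cons.prems \<open>ys = y # zs\<close> by auto
    next
      case False
      then have "y \<in> V1" using edge_subset_verts[OF rt p(1)] V1_eq by auto
      moreover have "{y, x} = e" using V2_closed[of y x] p(1) Cons.prems False by (auto simp: insert_commute)
      ultimately have "child = y" using child_eqI by blast
      then show ?thesis using \<open>ys = y # zs\<close> by simp
    qed
  qed
qed

lemma reachable_via_e_V2_or_child: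
  assumes "(r, z) \<in> (adj (edges (cut_tree2 T e) \<union> {e}))\<^sup>*"
  shows "z \<in> V2 \<or> z = child"
  using assms
proof (induction rule: rtrancl_induct)
  case base then show ?case using root_in_V2 by simp
next
  case (step y z)
  have "{y, z} \<in> edges (cut_tree2 T e) \<union> {e}" using step(2) by (rule adjD)
  then consider "{y, z} \<subseteq> V2" | "{y, z} = e" by auto
  then show ?case
  proof cases
    case 1 then show ?thesis by simp
  next
    case 2
    obtain a where "{a, child} = e" "a \<noteq> child" "a \<in> V2" "child \<in> V1" by (rule edge_eq_child)
    then show ?thesis using 2 step.IH child_notin_V2 by (auto simp: doubleton_eq_iff)
  qed
qed

text \<open>Every path from r into V1 crosses e at child, and the path from r through the trunk
  and then across e meets V1 only in child.\<close>

lemma subroot_V1: "subroot T V1 = child"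
  unfolding subroot_def
proof (rule the_equality)
  show "child \<in> V1 \<and> (\<forall>w\<in>V1. \<forall>xs. is_path E xs \<and> hd xs = r \<and> last xs = w \<longrightarrow> child \<in> set xs)"
    using child_in_V1 path_from_V2_to_V1_contains_child root_in_V2 by auto
next
  fix v assume v: "v \<in> V1 \<and> (\<forall>w\<in>V1. \<forall>xs. is_path E xs \<and> hd xs = r \<and> last xs = w \<longrightarrow> v \<in> set xs)"
  obtain a where a: "{a, child} = e" "a \<noteq> child" "a \<in> V2" "child \<in> V1" by (rule edge_eq_child)
  let ?F = "edges (cut_tree2 T e) \<union> {e}"
  have "(r, a) \<in> (adj ?F)\<^sup>*" using V2_connected[OF a(3)] adj_rtrancl_mono[of _ ?F] by blast
  moreover have "(a, child) \<in> adj ?F" using a(1) by (simp add: adj_def)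
  ultimately have "(r, child) \<in> (adj ?F)\<^sup>*" by simp
  then obtain xs where xs: "is_path ?F xs" "hd xs = r" "last xs = child" "\<forall>z\<in>set xs. (r, z) \<in> (adj ?F)\<^sup>*"
    using adj_rtrancl_path by blast
  have "is_path E xs" using is_path_mono[OF _ xs(1)] eE by auto
  then have "v \<in> set xs" using v xs child_in_V1 by blast
  then show "v = child" using xs(4) reachable_via_e_V2_or_child v V1_eq by blast
qed

lemma embedding_cut_tree2: "embedding (cut_tree2 T e) T id"
  unfolding embedding_def using is_rtree_cut_tree2 rt V2_subset subroot_root[OF rt root_in_V2]
  by (auto simp: img_edges_def)

lemma embedding_cut_tree1: "embedding (cut_tree1 T e) T id"
  unfolding embedding_def using is_rtree_cut_tree1 rt V1_eq subroot_V1
  by (auto simp: img_edges_def)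

lemma edge_not_subset_V1: "\<not> e \<subseteq> V1"
  using edge_eq_child V1_eq by blast

lemma edge_not_subset_V2: "\<not> e \<subseteq> V2"
  using child_in_edge child_notin_V2 by blast

lemma edge_cut_cut_tree1: "g \<in> E \<Longrightarrow> g \<subseteq> V1 \<Longrightarrow> edge_cut (cut_tree1 T e) g"
  using is_rtree_cut_tree1 edge_not_subset_V1 by unfold_locales auto

lemma edge_cut_cut_tree2: "g \<in> E \<Longrightarrow> g \<subseteq> V2 \<Longrightarrow> edge_cut (cut_tree2 T e) g"
  using is_rtree_cut_tree2 edge_not_subset_V2 by unfold_locales auto

end

section \<open>Cutting two edges\<close>

lemma cut_verts_disjoint: "cut_verts1 T g \<inter> cut_verts2 T g = {}"
  by (auto simp: cut_verts1_def)

lemma cut_verts2_subtree: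
  assumes rt: "is_rtree T" and rt': "is_rtree T'" and sv: "verts T' \<subseteq> verts T"
    and se: "edges T' \<subseteq> edges T" and fE': "f \<in> edges T'"
    and rr: "root T' \<in> cut_verts2 T f"
  shows "cut_verts2 T' f = verts T' \<inter> cut_verts2 T f"
proof -
  interpret cf: edge_cut T f using rt fE' se by unfold_locales auto
  interpret cf': edge_cut T' f using rt' fE' by unfold_locales
  have walk: "(u, w) \<in> (adj (edges T - {f}))\<^sup>*" if "(u, w) \<in> (adj F)\<^sup>*" "F \<subseteq> edges T' - {f}" for u w F
    using that adj_rtrancl_mono[of F "edges T - {f}"] se by blast
  have sub: "cut_verts2 T' f \<subseteq> cut_verts2 T f"
  proof
    fix w assume "w \<in> cut_verts2 T' f"
    then have "w \<in> verts T" "(root T', w) \<in> (adj (edges T - {f}))\<^sup>*"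
      using cf'.V2_iff sv walk by auto
    then show "w \<in> cut_verts2 T f" using rr cf.V2_iff by (meson rtrancl_trans)
  qed
  have "w \<in> cut_verts2 T' f" if w: "w \<in> verts T'" "w \<in> cut_verts2 T f" for w
  proof (rule ccontr)
    let ?c = "root (cut_tree1 T' f)"
    assume "w \<notin> cut_verts2 T' f"
    \<comment> \<open>then ?c is reachable from the root of T without using f, so both ends of f lie in
      cut_verts2 T f\<close>
    then have "(?c, w) \<in> (adj (edges T - {f}))\<^sup>*"
      using cf'.V1_connected w(1) walk[of ?c w "edges (cut_tree1 T' f)"] by (auto simp: cf'.V1_eq)
    then have "(root T, ?c) \<in> (adj (edges T - {f}))\<^sup>*"
      using w(2) cf.V2_iff adj_rtrancl_sym by (meson rtrancl_trans)
    moreover have "?c \<in> verts T" using cf'.child_in_V1 sv cf'.V1_eq by blast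
    ultimately have "?c \<in> cut_verts2 T f" using cf.V2_iff by blast
    moreover obtain a where "{a, ?c} = f" "a \<noteq> ?c" "a \<in> cut_verts2 T' f"
      by (rule cf'.edge_eq_child)
    ultimately show False using cf.edge_not_inside_V2 sub by blast
  qed
  then show ?thesis using sub cf'.V2_subset by blast
qed

context edge_cut
begin

lemma cut_verts2_cut_tree2:
  assumes "g \<in> E" "g \<subseteq> V2"
  shows "cut_verts2 (cut_tree2 T e) g = V2 \<inter> cut_verts2 T g"
proof -
  interpret cg: edge_cut T g using rt assms(1) by unfold_locales
  have "g \<in> edges (cut_tree2 T e)" using assms edge_not_subset_V2 by auto
  then have "cut_verts2 (cut_tree2 T e) g = verts (cut_tree2 T e) \<inter> cut_verts2 T g"
    using cut_verts2_subtree[OF rt is_rtree_cut_tree2] V2_subset cg.root_in_V2 by auto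
  then show ?thesis by simp
qed

lemma cut_tree2_cut_tree2:
  assumes "g \<in> E" "g \<subseteq> V2"
  shows "cut_tree2 (cut_tree2 T e) g =
    (V2 \<inter> cut_verts2 T g, {h \<in> E. h \<noteq> e \<and> h \<noteq> g \<and> h \<subseteq> V2 \<inter> cut_verts2 T g}, r)"
  unfolding cut_tree2_def[of "cut_tree2 T e"] cut_verts2_cut_tree2[OF assms]
  by (auto simp: cut_tree2_def root_def edges_def)

end

text \<open>The hypothesis f \<subseteq> cut_verts1 T e says that f lies below e, i.e. in the branch cut off
  by e; two edges are incomparable if each lies in the trunk of the other.\<close>

locale edge_pair = ce: edge_cut T e + cf: edge_cut T f for T e f
begin

lemma V2_subset_if_below:
  assumes "f \<subseteq> cut_verts1 T e"
  shows "cut_verts2 T e \<subseteq> cut_verts2 T f"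
proof
  fix w assume w: "w \<in> cut_verts2 T e"
  have "f \<notin> edges (cut_tree2 T e)"
    using assms edge_nonempty[OF ce.rt cf.eE] cut_verts_disjoint[of T e] by auto
  then have "edges (cut_tree2 T e) \<subseteq> edges T - {f}" by auto
  then have "(root T, w) \<in> (adj (edges T - {f}))\<^sup>*" using ce.V2_connected[OF w] adj_rtrancl_mono by blast
  then show "w \<in> cut_verts2 T f" using w ce.V2_subset cf.V2_iff by blast
qed

lemma edge_subset_V2_if_below:
  assumes "f \<subseteq> cut_verts1 T e"
  shows "e \<subseteq> cut_verts2 T f"
proof -
  obtain a where a: "{a, root (cut_tree1 T e)} = e" "a \<in> cut_verts2 T e"
    by (rule ce.edge_eq_child)
  have a2: "a \<in> cut_verts2 T f" using a(2) V2_subset_if_below[OF assms] by blast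
  have "e \<noteq> f" using assms ce.edge_not_subset_V1 by blast
  then have "{root (cut_tree1 T e), a} \<in> edges T" "{root (cut_tree1 T e), a} \<noteq> f"
    using a(1) ce.eE by (simp_all add: insert_commute)
  then have "root (cut_tree1 T e) \<in> cut_verts2 T f" using cf.V2_closed a2 by blast
  then have "{a, root (cut_tree1 T e)} \<subseteq> cut_verts2 T f" using a2 by simp
  then show ?thesis by (simp only: a(1))
qed

lemma V1_subset_if_below: "f \<subseteq> cut_verts1 T e \<Longrightarrow> cut_verts1 T f \<subseteq> cut_verts1 T e"
  using V2_subset_if_below by (auto simp: cut_verts1_def)

lemma cut_verts2_cut_tree1:
  assumes "f \<subseteq> cut_verts1 T e"
  shows "cut_verts2 (cut_tree1 T e) f = cut_verts1 T e \<inter> cut_verts2 T f"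
proof -
  have "root (cut_tree1 T e) \<in> cut_verts2 T f"
    using edge_subset_V2_if_below[OF assms] ce.child_in_edge by blast
  moreover have "f \<in> edges (cut_tree1 T e)" using assms cf.eE ce.edge_not_subset_V1 by auto
  ultimately show ?thesis using cut_verts2_subtree[OF ce.rt ce.is_rtree_cut_tree1] ce.V1_eq by auto
qed

lemma cut_tree1_cut_tree1:
  assumes "f \<subseteq> cut_verts1 T e"
  shows "cut_tree1 (cut_tree1 T e) f = cut_tree1 T f"
proof -
  have verts: "cut_verts1 (cut_tree1 T e) f = cut_verts1 T f"
    using cut_verts2_cut_tree1[OF assms] V1_subset_if_below[OF assms] cf.V1_eq ce.V1_eq
    by (auto simp: cut_verts1_def[of "cut_tree1 T e"])
  have "g \<noteq> e" "g \<subseteq> cut_verts1 T e" if "g \<subseteq> cut_verts1 T f" for g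
    using that edge_subset_V2_if_below[OF assms] edge_nonempty[OF ce.rt ce.eE] cut_verts_disjoint[of T f]
      V1_subset_if_below[OF assms] by blast+
  then have "{g \<in> edges (cut_tree1 T e) - {f}. g \<subseteq> cut_verts1 T f} = {g \<in> edges T - {f}. g \<subseteq> cut_verts1 T f}"
    by auto
  then show ?thesis unfolding cut_tree1_def[of "cut_tree1 T e"] verts by (simp add: cut_tree1_def)
qed

lemma cut_tree2_cut_tree1:
  assumes "f \<subseteq> cut_verts1 T e"
  shows "cut_tree2 (cut_tree1 T e) f = cut_tree1 (cut_tree2 T f) e"
proof -
  have e2: "e \<subseteq> cut_verts2 T f" by (rule edge_subset_V2_if_below[OF assms])
  interpret c2: edge_cut "cut_tree2 T f" e by (rule cf.edge_cut_cut_tree2[OF ce.eE e2])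
  have verts1: "cut_verts1 (cut_tree2 T f) e = cut_verts1 T e \<inter> cut_verts2 T f"
    using cf.cut_verts2_cut_tree2[OF ce.eE e2] V2_subset_if_below[OF assms] cf.V2_subset
    by (auto simp: cut_verts1_def)
  have root: "root (cut_tree1 (cut_tree2 T f) e) = root (cut_tree1 T e)"
    using c2.child_eqI ce.child_in_edge ce.child_in_V1 e2 verts1 by blast
  have "cut_tree2 (cut_tree1 T e) f = (cut_verts1 T e \<inter> cut_verts2 T f,
     {g \<in> edges (cut_tree1 T e) - {f}. g \<subseteq> cut_verts1 T e \<inter> cut_verts2 T f}, root (cut_tree1 T e))"
    unfolding cut_tree2_def[of "cut_tree1 T e"] cut_verts2_cut_tree1[OF assms] by simp
  also have "\<dots> = cut_tree1 (cut_tree2 T f) e"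
    using root unfolding cut_tree1_def[of "cut_tree2 T f"] verts1
    by (auto simp: root_def[of "(_, _, _)"])
  finally show ?thesis .
qed

lemma cut_tree2_cut_tree2_if_below:
  assumes "f \<subseteq> cut_verts1 T e"
  shows "cut_tree2 (cut_tree2 T f) e = cut_tree2 T e"
proof -
  have e2: "e \<subseteq> cut_verts2 T f" by (rule edge_subset_V2_if_below[OF assms])
  have "cut_verts2 T e \<subseteq> cut_verts2 T f" by (rule V2_subset_if_below[OF assms])
  moreover have "\<not> f \<subseteq> cut_verts2 T e"
    using assms edge_nonempty[OF ce.rt cf.eE] cut_verts_disjoint[of T e] by blast
  ultimately show ?thesis
    unfolding cf.cut_tree2_cut_tree2[OF ce.eE e2] by (auto simp: cut_tree2_def root_def edges_def verts_def)
qed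

lemma V1_subset_V2_if_incomparable:
  assumes "e \<subseteq> cut_verts2 T f" "f \<subseteq> cut_verts2 T e"
  shows "cut_verts1 T f \<subseteq> cut_verts2 T e"
proof
  fix x assume "x \<in> cut_verts1 T f"
  then have "(root (cut_tree1 T f), x) \<in> (adj (edges (cut_tree1 T f)))\<^sup>*" by (rule cf.V1_connected)
  then show "x \<in> cut_verts2 T e"
  proof (induction rule: rtrancl_induct)
    case base then show ?case using cf.child_in_edge assms(2) by blast
  next
    case (step y z)
    have yz: "{y, z} \<in> edges T - {f}" "{y, z} \<subseteq> cut_verts1 T f" using step(2) by (auto simp: adj_def)
    have "{y, z} \<noteq> e" using yz(2) assms(1) ce.edge_not_subset_V1 cut_verts_disjoint[of T f]
      edge_nonempty[OF ce.rt ce.eE] by blast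
    then show ?case using ce.V2_closed[of z y] yz(1) step.IH by (simp add: insert_commute)
  qed
qed

lemma cut_tree1_cut_tree2:
  assumes "e \<subseteq> cut_verts2 T f" "f \<subseteq> cut_verts2 T e"
  shows "cut_tree1 (cut_tree2 T e) f = cut_tree1 T f"
proof -
  have sub: "cut_verts1 T f \<subseteq> cut_verts2 T e" by (rule V1_subset_V2_if_incomparable[OF assms])
  have verts: "cut_verts1 (cut_tree2 T e) f = cut_verts1 T f"
    using ce.cut_verts2_cut_tree2[OF cf.eE assms(2)] sub ce.V2_subset
    by (auto simp: cut_verts1_def)
  have "g \<noteq> e" if "g \<subseteq> cut_verts1 T f" for g
    using that assms(1) edge_nonempty[OF ce.rt ce.eE] cut_verts_disjoint[of T f] by blast
  then have "{g \<in> edges (cut_tree2 T e) - {f}. g \<subseteq> cut_verts1 T f} = {g \<in> edges T - {f}. g \<subseteq> cut_verts1 T f}"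
    using sub by auto
  then show ?thesis unfolding cut_tree1_def[of "cut_tree2 T e"] verts by (simp add: cut_tree1_def)
qed

end

lemma cut_tree2_cut_tree2_commute:
  assumes "edge_cut T e" "edge_cut T f" "e \<subseteq> cut_verts2 T f" "f \<subseteq> cut_verts2 T e"
  shows "cut_tree2 (cut_tree2 T e) f = cut_tree2 (cut_tree2 T f) e"
  using edge_cut.cut_tree2_cut_tree2[OF assms(1) edge_cut.eE[OF assms(2)] assms(4)]
    edge_cut.cut_tree2_cut_tree2[OF assms(2) edge_cut.eE[OF assms(1)] assms(3)]
  by (auto simp: Int_commute conj_commute)

section \<open>Homeomorphisms and cutting\<close>

lemma img_edges_comp: "img_edges (k \<circ> j) E = img_edges k (img_edges j E)"
  unfolding img_edges_def image_image by (simp add: image_comp)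

lemma rhomeo_embedding: "rhomeo T T2 j \<Longrightarrow> embedding T T2 j"
  using subroot_root[OF _ rtreeD(2)] unfolding rhomeo_def embedding_def by (auto simp: bij_betw_def)

lemma rhomeo_id: "is_rtree T \<Longrightarrow> rhomeo T T id"
  unfolding rhomeo_def by (auto simp: img_edges_def)

lemma rhomeo_comp: "rhomeo T T2 j \<Longrightarrow> rhomeo T2 T3 k \<Longrightarrow> rhomeo T T3 (k \<circ> j)"
  unfolding rhomeo_def img_edges_comp by (auto simp: bij_betw_trans)

lemma rhomeo_inv:
  assumes "rhomeo T T2 j"
  shows "rhomeo T2 T (inv_into (verts T) j)"
proof -
  have rt: "is_rtree T" "is_rtree T2" and b: "bij_betw j (verts T) (verts T2)"
    and ed: "img_edges j (edges T) = edges T2" and ro: "j (root T) = root T2"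
    using assms by (auto simp: rhomeo_def)
  have inj: "inj_on j (verts T)" using b by (simp add: bij_betw_def)
  have "img_edges (inv_into (verts T) j) (edges T2) = (\<lambda>g. inv_into (verts T) j ` j ` g) ` edges T"
    using ed[symmetric] by (simp add: img_edges_def image_comp)
  also have "\<dots> = edges T"
    using inv_into_image_cancel[OF inj edge_subset_verts[OF rt(1)]] by simp
  finally have "img_edges (inv_into (verts T) j) (edges T2) = edges T" .
  moreover have "inv_into (verts T) j (root T2) = root T"
    using inv_into_f_f[OF inj rtreeD(2)[OF rt(1)]] ro by simp
  ultimately show ?thesis using rt bij_betw_inv_into[OF b] by (simp add: rhomeo_def)
qed

lemma adj_rtrancl_image: "(u, w) \<in> (adj F)\<^sup>* \<Longrightarrow> (j u, j w) \<in> (adj (img_edges j F))\<^sup>*"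
proof (induction rule: rtrancl_induct)
  case base then show ?case by simp
next
  case (step y z)
  have "{y, z} \<in> F" using step(2) by (rule adjD)
  then have "j ` {y, z} \<in> img_edges j F" unfolding img_edges_def by (rule imageI)
  then have "(j y, j z) \<in> adj (img_edges j F)" by (simp add: adj_def)
  then show ?case using step.IH by (meson rtrancl_into_rtrancl)
qed

lemma img_edges_restrict:
  assumes "inj_on j V" "E \<subseteq> Pow V" "e \<in> E" "S \<subseteq> V"
  shows "img_edges j {g \<in> E - {e}. g \<subseteq> S} = {g \<in> img_edges j E - {j ` e}. g \<subseteq> j ` S}"
proof -
  have inj: "inj_on (image j) E" using inj_on_image_Pow[OF assms(1)] assms(2) inj_on_subset by blast
  have ne: "j ` g \<noteq> j ` e \<longleftrightarrow> g \<noteq> e" if "g \<in> E" for g using inj_onD[OF inj _ that assms(3)] by blast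
  have sub: "j ` g \<subseteq> j ` S \<longleftrightarrow> g \<subseteq> S" if "g \<in> E" for g
  proof
    assume "j ` g \<subseteq> j ` S"
    then show "g \<subseteq> S" using inj_on_image_mem_iff[OF assms(1) _ assms(4)] that assms(2) by blast
  qed blast
  show ?thesis unfolding img_edges_def
  proof (intro equalityI subsetI)
    fix g' assume "g' \<in> image j ` {g \<in> E - {e}. g \<subseteq> S}"
    then obtain g where "g \<in> E" "g \<noteq> e" "g \<subseteq> S" "g' = j ` g" by blast
    then show "g' \<in> {g \<in> image j ` E - {j ` e}. g \<subseteq> j ` S}" using ne by blast
  next
    fix g' assume "g' \<in> {g \<in> image j ` E - {j ` e}. g \<subseteq> j ` S}"
    then obtain g where "g \<in> E" "g' = j ` g" "j ` g \<noteq> j ` e" "j ` g \<subseteq> j ` S" by blast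
    then show "g' \<in> image j ` {g \<in> E - {e}. g \<subseteq> S}" using sub by blast
  qed
qed

context
  fixes T T2 :: rtree and j :: "nat \<Rightarrow> nat" and e :: "nat set"
  assumes h: "rhomeo T T2 j" and eE: "e \<in> edges T"
begin

lemma rhomeo_rtreeD:
  shows "is_rtree T" "is_rtree T2" "inj_on j (verts T)" "j ` verts T = verts T2"
    "img_edges j (edges T) = edges T2" "j (root T) = root T2" "j ` e \<in> edges T2"
  using h eE by (auto simp: rhomeo_def bij_betw_def img_edges_def)

lemma image_cut_verts2_subset: "j ` cut_verts2 T e \<subseteq> cut_verts2 T2 (j ` e)"
proof
  note j = rhomeo_rtreeD
  fix w' assume "w' \<in> j ` cut_verts2 T e"
  then obtain w where w: "w \<in> verts T" "(root T, w) \<in> (adj (edges T - {e}))\<^sup>*" "w' = j w"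
    by (auto simp: cut_verts2_def)
  have "{g \<in> edges T - {e}. g \<subseteq> verts T} = edges T - {e}"
    "{g \<in> edges T2 - {j ` e}. g \<subseteq> verts T2} = edges T2 - {j ` e}"
    using edge_subset_verts[OF j(1)] edge_subset_verts[OF j(2)] by blast+
  then have "img_edges j (edges T - {e}) = edges T2 - {j ` e}"
    using img_edges_restrict[OF j(3) edges_subset_Pow_verts[OF j(1)] eE order_refl] j(4,5) by simp
  then have "(j (root T), j w) \<in> (adj (edges T2 - {j ` e}))\<^sup>*"
    using adj_rtrancl_image[OF w(2), of j] by simp
  moreover have "j w \<in> verts T2" using w(1) j(4) by blast
  ultimately show "w' \<in> cut_verts2 T2 (j ` e)" using j(6) w(3) by (simp add: cut_verts2_def)
qed

end

lemma cut_verts2_rhomeo: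
  assumes h: "rhomeo T T2 j" and eE: "e \<in> edges T"
  shows "cut_verts2 T2 (j ` e) = j ` cut_verts2 T e"
proof
  show "j ` cut_verts2 T e \<subseteq> cut_verts2 T2 (j ` e)" by (rule image_cut_verts2_subset[OF h eE])
  let ?i = "inv_into (verts T) j"
  have "?i ` j ` e = e" using rhomeo_rtreeD[OF h eE] edge_subset_verts eE by simp
  then have "?i ` cut_verts2 T2 (j ` e) \<subseteq> cut_verts2 T e"
    using image_cut_verts2_subset[OF rhomeo_inv[OF h] rhomeo_rtreeD(7)[OF h eE]] by simp
  moreover have "cut_verts2 T2 (j ` e) \<subseteq> j ` verts T"
    using rhomeo_rtreeD(4)[OF h eE] by (auto simp: cut_verts2_def)
  ultimately show "cut_verts2 T2 (j ` e) \<subseteq> j ` cut_verts2 T e"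
  proof (intro subsetI)
    fix w assume w: "w \<in> cut_verts2 T2 (j ` e)"
    then have "w \<in> j ` verts T" using \<open>cut_verts2 T2 (j ` e) \<subseteq> j ` verts T\<close> by blast
    then have "j (?i w) = w" by (rule f_inv_into_f)
    moreover have "?i w \<in> cut_verts2 T e" using w \<open>?i ` cut_verts2 T2 (j ` e) \<subseteq> cut_verts2 T e\<close> by blast
    ultimately show "w \<in> j ` cut_verts2 T e" by (metis imageI)
  qed
qed

lemma cut_verts1_rhomeo:
  assumes h: "rhomeo T T2 j" and eE: "e \<in> edges T"
  shows "cut_verts1 T2 (j ` e) = j ` cut_verts1 T e"
proof -
  note j = rhomeo_rtreeD[OF h eE]
  have "cut_verts2 T e \<subseteq> verts T" by (auto simp: cut_verts2_def)
  then show ?thesis unfolding cut_verts1_def cut_verts2_rhomeo[OF h eE] j(4)[symmetric]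
    by (simp add: inj_on_image_set_diff[OF j(3)])
qed

lemma rhomeo_cut_tree1:
  assumes h: "rhomeo T T2 j" and eE: "e \<in> edges T"
  shows "rhomeo (cut_tree1 T e) (cut_tree1 T2 (j ` e)) j"
proof -
  note j = rhomeo_rtreeD[OF h eE]
  interpret c: edge_cut T e using j(1) eE by unfold_locales
  interpret c2: edge_cut T2 "j ` e" using j(2,7) by unfold_locales
  have V1: "cut_verts1 T2 (j ` e) = j ` cut_verts1 T e" by (rule cut_verts1_rhomeo[OF h eE])
  have V1s: "cut_verts1 T e \<subseteq> verts T" by (auto simp: cut_verts1_def)
  have "j (root (cut_tree1 T e)) \<in> j ` e" "j (root (cut_tree1 T e)) \<in> cut_verts1 T2 (j ` e)"
    using c.child_in_edge c.child_in_V1 V1 by auto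
  then have "root (cut_tree1 T2 (j ` e)) = j (root (cut_tree1 T e))" by (rule c2.child_eqI)
  moreover have "bij_betw j (cut_verts1 T e) (cut_verts1 T2 (j ` e))"
    using V1 j(3) V1s inj_on_subset by (auto simp: bij_betw_def)
  moreover have "img_edges j (edges (cut_tree1 T e)) = edges (cut_tree1 T2 (j ` e))"
    using img_edges_restrict[OF j(3) edges_subset_Pow_verts[OF j(1)] eE V1s] j(5) V1 by simp
  ultimately show ?thesis using c.is_rtree_cut_tree1 c2.is_rtree_cut_tree1 by (simp add: rhomeo_def)
qed

lemma rhomeo_cut_tree2:
  assumes h: "rhomeo T T2 j" and eE: "e \<in> edges T"
  shows "rhomeo (cut_tree2 T e) (cut_tree2 T2 (j ` e)) j"
proof -
  note j = rhomeo_rtreeD[OF h eE]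
  interpret c: edge_cut T e using j(1) eE by unfold_locales
  interpret c2: edge_cut T2 "j ` e" using j(2,7) by unfold_locales
  have V2: "cut_verts2 T2 (j ` e) = j ` cut_verts2 T e" by (rule cut_verts2_rhomeo[OF h eE])
  have "bij_betw j (cut_verts2 T e) (cut_verts2 T2 (j ` e))"
    using V2 j(3) c.V2_subset inj_on_subset by (auto simp: bij_betw_def)
  moreover have "img_edges j (edges (cut_tree2 T e)) = edges (cut_tree2 T2 (j ` e))"
    using img_edges_restrict[OF j(3) edges_subset_Pow_verts[OF j(1)] eE c.V2_subset] j(5) V2 by simp
  ultimately show ?thesis using c.is_rtree_cut_tree2 c2.is_rtree_cut_tree2 j(6) by (simp add: rhomeo_def)
qed

locale tree_structure =
  fixes phi :: "rtree \<Rightarrow> 'a set" and phimap :: "rtree \<Rightarrow> rtree \<Rightarrow> (nat \<Rightarrow> nat) \<Rightarrow> 'a \<Rightarrow> 'a"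
  assumes functorial: "rtree_structure phi phimap"
begin

lemma phimap_in_phi: "embedding T' T f \<Longrightarrow> s \<in> phi T \<Longrightarrow> phimap T' T f s \<in> phi T'"
  using functorial unfolding rtree_structure_def by blast

lemma phimap_cong:
  "embedding T' T f \<Longrightarrow> (\<forall>v\<in>verts T'. f v = g v) \<Longrightarrow> s \<in> phi T \<Longrightarrow> phimap T' T f s = phimap T' T g s"
  using functorial unfolding rtree_structure_def by blast

lemma phimap_id: "is_rtree T \<Longrightarrow> s \<in> phi T \<Longrightarrow> phimap T T id s = s"
  using functorial unfolding rtree_structure_def by blast

lemma phimap_comp:
  "embedding T1 T2 f \<Longrightarrow> embedding T2 T3 g \<Longrightarrow> s \<in> phi T3 \<Longrightarrow>
    phimap T1 T3 (g \<circ> f) s = phimap T1 T2 f (phimap T2 T3 g s)"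
  using functorial unfolding rtree_structure_def by blast

lemma restr_in_phi: "embedding T' T id \<Longrightarrow> s \<in> phi T \<Longrightarrow> restr phimap T T' s \<in> phi T'"
  unfolding restr_def by (rule phimap_in_phi)

lemma restr_restr:
  "embedding T'' T' id \<Longrightarrow> embedding T' T id \<Longrightarrow> s \<in> phi T \<Longrightarrow>
    restr phimap T' T'' (restr phimap T T' s) = restr phimap T T'' s"
  unfolding restr_def using phimap_comp[of T'' T' id T id s] by simp

lemma rclass_self: "is_rtree T \<Longrightarrow> s \<in> phi T \<Longrightarrow> (T, s) \<in> rclass phi phimap T s"
  unfolding rclass_def using rhomeo_id phimap_id by blast

lemma rclass_trans:
  assumes "(B, b) \<in> rclass phi phimap A a" "(C, c) \<in> rclass phi phimap B b"
  shows "(C, c) \<in> rclass phi phimap A a"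
proof -
  obtain j where j: "rhomeo A B j" "phimap A B j b = a" using assms(1) unfolding rclass_def by blast
  obtain k where k: "c \<in> phi C" "rhomeo B C k" "phimap B C k c = b"
    using assms(2) unfolding rclass_def by blast
  have "phimap A C (k \<circ> j) c = a"
    using phimap_comp[OF rhomeo_embedding[OF j(1)] rhomeo_embedding[OF k(2)] k(1)] j(2) k(3) by simp
  then show ?thesis using rhomeo_comp[OF j(1) k(2)] k(1) unfolding rclass_def by blast
qed

lemma rclass_sym:
  assumes "a \<in> phi A" "(B, b) \<in> rclass phi phimap A a"
  shows "(A, a) \<in> rclass phi phimap B b"
proof -
  obtain j where j: "b \<in> phi B" "rhomeo A B j" "phimap A B j b = a"
    using assms(2) unfolding rclass_def by blast
  let ?i = "inv_into (verts A) j"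
  have i: "rhomeo B A ?i" by (rule rhomeo_inv[OF j(2)])
  have "phimap B A ?i a = phimap B B (j \<circ> ?i) b"
    using phimap_comp[OF rhomeo_embedding[OF i] rhomeo_embedding[OF j(2)] j(1)] j(3) by simp
  also have "\<dots> = phimap B B id b"
  proof (rule phimap_cong[OF _ _ j(1)])
    show "embedding B B (j \<circ> ?i)" using rhomeo_embedding rhomeo_comp[OF i j(2)] by blast
    have "verts B = j ` verts A" using j(2) by (simp add: rhomeo_def bij_betw_def)
    then show "\<forall>v\<in>verts B. (j \<circ> ?i) v = id v" by (simp add: f_inv_into_f)
  qed
  also have "\<dots> = b" using phimap_id j(1,2) by (simp add: rhomeo_def)
  finally show ?thesis using i assms(1) unfolding rclass_def by blast
qed

lemma rclass_eq:
  assumes "a \<in> phi A" "(B, b) \<in> rclass phi phimap A a"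
  shows "rclass phi phimap B b = rclass phi phimap A a"
proof (intro set_eqI iffI)
  fix p assume "p \<in> rclass phi phimap B b"
  then show "p \<in> rclass phi phimap A a" using rclass_trans[OF assms(2)] by (cases p) blast
next
  fix p assume "p \<in> rclass phi phimap A a"
  then show "p \<in> rclass phi phimap B b" using rclass_trans[OF rclass_sym[OF assms]] by (cases p) blast
qed

lemma restr_rhomeo:
  assumes "rhomeo T T2 j" "rhomeo T' T2' j" "embedding T' T id" "embedding T2' T2 id" "s2 \<in> phi T2"
  shows "(T2', restr phimap T2 T2' s2) \<in> rclass phi phimap T' (restr phimap T T' (phimap T T2 j s2))"
proof -
  have "phimap T' T2' j (restr phimap T2 T2' s2) = phimap T' T2 (id \<circ> j) s2"
    unfolding restr_def using phimap_comp[OF rhomeo_embedding[OF assms(2)] assms(4,5)] by simp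
  also have "\<dots> = restr phimap T T' (phimap T T2 j s2)"
    unfolding restr_def using phimap_comp[OF assms(3) rhomeo_embedding[OF assms(1)] assms(5)] by simp
  finally show ?thesis using assms(2) restr_in_phi[OF assms(4,5)] unfolding rclass_def by blast
qed

definition branch_class :: "rtree \<Rightarrow> 'a \<Rightarrow> nat set \<Rightarrow> (rtree \<times> 'a) set" where
  "branch_class T s e = rclass phi phimap (cut_tree1 T e) (restr phimap T (cut_tree1 T e) s)"

definition trunk_class :: "rtree \<Rightarrow> 'a \<Rightarrow> nat set \<Rightarrow> (rtree \<times> 'a) set" where
  "trunk_class T s e = rclass phi phimap (cut_tree2 T e) (restr phimap T (cut_tree2 T e) s)"

lemma rho_gen_eq_sum:
  "(rho_gen phi phimap T s :: _ \<Rightarrow> 'r::comm_ring_1) = (\<Sum>e\<in>edges T. delta (branch_class T s e, trunk_class T s e))"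
  unfolding rho_gen_def branch_class_def trunk_class_def ..

lemma branch_class_rhomeo:
  assumes h: "rhomeo T T2 j" and s2: "s2 \<in> phi T2" and eE: "e \<in> edges T"
  shows "branch_class T2 s2 (j ` e) = branch_class T (phimap T T2 j s2) e"
proof -
  note j = rhomeo_rtreeD[OF h eE]
  interpret c: edge_cut T e using j(1) eE by unfold_locales
  interpret c2: edge_cut T2 "j ` e" using j(2,7) by unfold_locales
  have "phimap T T2 j s2 \<in> phi T" using phimap_in_phi[OF rhomeo_embedding[OF h] s2] .
  then show ?thesis unfolding branch_class_def
    by (intro rclass_eq restr_in_phi c.embedding_cut_tree1
        restr_rhomeo[OF h rhomeo_cut_tree1[OF h eE] c.embedding_cut_tree1 c2.embedding_cut_tree1 s2])
qed

lemma trunk_class_rhomeo: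
  assumes h: "rhomeo T T2 j" and s2: "s2 \<in> phi T2" and eE: "e \<in> edges T"
  shows "trunk_class T2 s2 (j ` e) = trunk_class T (phimap T T2 j s2) e"
proof -
  note j = rhomeo_rtreeD[OF h eE]
  interpret c: edge_cut T e using j(1) eE by unfold_locales
  interpret c2: edge_cut T2 "j ` e" using j(2,7) by unfold_locales
  have "phimap T T2 j s2 \<in> phi T" using phimap_in_phi[OF rhomeo_embedding[OF h] s2] .
  then show ?thesis unfolding trunk_class_def
    by (intro rclass_eq restr_in_phi c.embedding_cut_tree2
        restr_rhomeo[OF h rhomeo_cut_tree2[OF h eE] c.embedding_cut_tree2 c2.embedding_cut_tree2 s2])
qed

lemma rho_gen_rclass:
  assumes "(T2, s2) \<in> rclass phi phimap T s"
  shows "(rho_gen phi phimap T2 s2 :: _ \<Rightarrow> 'r::comm_ring_1) = rho_gen phi phimap T s"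
proof -
  obtain j where j: "s2 \<in> phi T2" "rhomeo T T2 j" "phimap T T2 j s2 = s"
    using assms unfolding rclass_def by blast
  have rt: "is_rtree T" and inj: "inj_on j (verts T)" and ed: "edges T2 = image j ` edges T"
    using j(2) by (auto simp: rhomeo_def bij_betw_def img_edges_def)
  have "inj_on (image j) (edges T)"
    using inj_on_image_Pow[OF inj] edges_subset_Pow_verts[OF rt] inj_on_subset by blast
  then show ?thesis unfolding rho_gen_eq_sum ed
    using branch_class_rhomeo[OF j(2,1)] trunk_class_rhomeo[OF j(2,1)] j(3) by (simp add: sum.reindex)
qed

end

section \<open>Linear extension on finitely supported functions\<close>

definition supp :: "('b \<Rightarrow> 'r::zero) \<Rightarrow> 'b set" where
  "supp x = {b. x b \<noteq> 0}"

lemma sum_apply: "(\<Sum>i\<in>I. g i) x = (\<Sum>i\<in>I. g i x)"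
  by (induction I rule: infinite_finite_induct) auto

lemma supp_sum_subset: "supp (\<lambda>q. \<Sum>i\<in>I. g i q) \<subseteq> (\<Union>i\<in>I. supp (g i))"
proof
  fix q assume "q \<in> supp (\<lambda>q. \<Sum>i\<in>I. g i q)"
  then show "q \<in> (\<Union>i\<in>I. supp (g i))"
    by (rule contrapos_pp) (auto simp: supp_def)
qed

lemma supp_delta_subset: "supp (delta b :: _ \<Rightarrow> 'r::zero_neq_one) \<subseteq> {b}"
  by (auto simp: supp_def delta_def)

lemma finite_supp_delta: "finite (supp (delta b :: _ \<Rightarrow> 'r::zero_neq_one))"
  by (rule finite_subset[OF supp_delta_subset]) simp

lemma supp_lin_subset: "supp (lin f x) \<subseteq> (\<Union>b\<in>supp x. supp (f b))"
proof
  fix c assume "c \<in> supp (lin f x)"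
  show "c \<in> (\<Union>b\<in>supp x. supp (f b))"
  proof (rule ccontr)
    assume "c \<notin> (\<Union>b\<in>supp x. supp (f b))"
    then have "\<forall>b\<in>{b. x b \<noteq> 0}. x b * f b c = 0" by (auto simp: supp_def)
    then have "lin f x c = 0" unfolding lin_def by (simp add: sum.neutral)
    then show False using \<open>c \<in> supp (lin f x)\<close> by (simp add: supp_def)
  qed
qed

lemma lin_eq_sum_superset:
  fixes x :: "'b \<Rightarrow> 'r::comm_ring_1"
  assumes "finite S" "supp x \<subseteq> S"
  shows "lin f x c = (\<Sum>b\<in>S. x b * f b c)"
  unfolding lin_def
  by (rule sum.mono_neutral_left) (use assms in \<open>auto simp: supp_def\<close>)

lemma lin_delta: "lin f (delta b :: _ \<Rightarrow> 'r::comm_ring_1) = f b"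
proof
  fix c
  show "lin f (delta b) c = f b c"
  proof (cases "(1::'r) = 0")
    case True
    \<comment> \<open>in the zero ring delta b has empty support\<close>
    then show ?thesis by (metis mult_1 mult_zero_left)
  next
    case False
    then have "{b'. (delta b :: _ \<Rightarrow> 'r) b' \<noteq> 0} = {b}" by (auto simp: delta_def)
    then show ?thesis by (simp add: lin_def delta_def)
  qed
qed

lemma lin_comb:
  fixes g :: "'i \<Rightarrow> 'b \<Rightarrow> 'r::comm_ring_1"
  assumes I: "finite I" and fin: "\<And>i. i \<in> I \<Longrightarrow> finite (supp (g i))"
  shows "lin f (\<lambda>b. \<Sum>i\<in>I. k i * g i b) = (\<lambda>c. \<Sum>i\<in>I. k i * lin f (g i) c)"
proof
  fix c
  let ?S = "\<Union>i\<in>I. supp (g i)"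
  have S: "finite ?S" using I fin by blast
  have "supp (\<lambda>b. \<Sum>i\<in>I. k i * g i b) \<subseteq> ?S"
    using supp_sum_subset[of "\<lambda>i b. k i * g i b" I] by (force simp: supp_def)
  then have "lin f (\<lambda>b. \<Sum>i\<in>I. k i * g i b) c = (\<Sum>b\<in>?S. (\<Sum>i\<in>I. k i * g i b) * f b c)"
    by (rule lin_eq_sum_superset[OF S])
  also have "\<dots> = (\<Sum>b\<in>?S. \<Sum>i\<in>I. k i * (g i b * f b c))"
    by (simp add: sum_distrib_right mult.assoc)
  also have "\<dots> = (\<Sum>i\<in>I. k i * (\<Sum>b\<in>?S. g i b * f b c))"
    by (simp add: sum.swap[of _ ?S] sum_distrib_left)
  also have "\<dots> = (\<Sum>i\<in>I. k i * lin f (g i) c)"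
  proof (rule sum.cong[OF refl])
    fix i assume "i \<in> I"
    then have "supp (g i) \<subseteq> ?S" by blast
    then show "k i * (\<Sum>b\<in>?S. g i b * f b c) = k i * lin f (g i) c"
      using lin_eq_sum_superset[OF S] by metis
  qed
  finally show "lin f (\<lambda>b. \<Sum>i\<in>I. k i * g i b) c = (\<Sum>i\<in>I. k i * lin f (g i) c)" .
qed

lemma lin_sum:
  fixes g :: "'i \<Rightarrow> 'b \<Rightarrow> 'r::comm_ring_1"
  assumes "finite I" "\<And>i. i \<in> I \<Longrightarrow> finite (supp (g i))"
  shows "lin f (\<Sum>i\<in>I. g i) = (\<Sum>i\<in>I. lin f (g i))"
proof -
  have "(\<Sum>i\<in>I. g i) = (\<lambda>b. \<Sum>i\<in>I. 1 * g i b)" by (simp add: fun_eq_iff sum_apply)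
  then have "lin f (\<Sum>i\<in>I. g i) = lin f (\<lambda>b. \<Sum>i\<in>I. 1 * g i b)" by simp
  also have "\<dots> = (\<lambda>c. \<Sum>i\<in>I. 1 * lin f (g i) c)" by (rule lin_comb[OF assms])
  finally show ?thesis by (simp add: sum_apply fun_eq_iff)
qed

lemma lin_uminus: "lin f (- x) = - lin f (x :: _ \<Rightarrow> 'r::comm_ring_1)"
  by (simp add: lin_def fun_eq_iff sum_negf)

lemma lin_add:
  fixes x y :: "'b \<Rightarrow> 'r::comm_ring_1"
  assumes "finite (supp x)" "finite (supp y)"
  shows "lin f (\<lambda>i. a * x i + b * y i) = (\<lambda>p. a * lin f x p + b * lin f y p)"
proof
  fix p
  let ?S = "supp x \<union> supp y"
  have S: "finite ?S" using assms by blast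
  have "lin f (\<lambda>i. a * x i + b * y i) p = (\<Sum>c\<in>?S. (a * x c + b * y c) * f c p)"
    by (rule lin_eq_sum_superset[OF S]) (auto simp: supp_def)
  also have "\<dots> = a * (\<Sum>c\<in>?S. x c * f c p) + b * (\<Sum>c\<in>?S. y c * f c p)"
    by (simp add: sum.distrib sum_distrib_left algebra_simps)
  also have "\<dots> = a * lin f x p + b * lin f y p"
    using lin_eq_sum_superset[OF S, of x f p] lin_eq_sum_superset[OF S, of y f p] by auto
  finally show "lin f (\<lambda>i. a * x i + b * y i) p = a * lin f x p + b * lin f y p" .
qed

context tree_structure
begin

lemma rho_tree_delta:
  assumes "is_rtree T" "s \<in> phi T"
  shows "(rho_tree phi phimap (delta (rclass phi phimap T s)) :: _ \<Rightarrow> 'r::comm_ring_1) = rho_gen phi phimap T s"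
proof -
  let ?C = "rclass phi phimap T s"
  obtain T' s' where rep: "(SOME p. p \<in> ?C) = (T', s')" by (cases "SOME p. p \<in> ?C")
  have "(T', s') \<in> ?C" unfolding rep[symmetric] using rclass_self[OF assms] by (rule someI)
  then show ?thesis unfolding rho_tree_def lin_delta rep using rho_gen_rclass by simp
qed

lemma rho_tree_lin: "(rho_tree phi phimap x :: _ \<Rightarrow> 'r::comm_ring_1) = lin (\<lambda>C. rho_tree phi phimap (delta C)) x"
  unfolding rho_tree_def lin_delta ..

lemma lin_rho_gen:
  assumes "is_rtree T"
  shows "lin h (rho_gen phi phimap T s :: _ \<Rightarrow> 'r::comm_ring_1)
    = (\<Sum>e\<in>edges T. h (branch_class T s e, trunk_class T s e))"
  unfolding rho_gen_eq_sum by (simp add: lin_sum finite_edges[OF assms] finite_supp_delta lin_delta)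

lemma cut_classes_in_rclasses:
  assumes "is_rtree T" "s \<in> phi T" "e \<in> edges T"
  shows "branch_class T s e \<in> rclasses phi phimap" "trunk_class T s e \<in> rclasses phi phimap"
proof -
  interpret c: edge_cut T e using assms(1,3) by unfold_locales
  show "branch_class T s e \<in> rclasses phi phimap" "trunk_class T s e \<in> rclasses phi phimap"
    unfolding branch_class_def trunk_class_def rclasses_def
    using c.is_rtree_cut_tree1 c.is_rtree_cut_tree2 restr_in_phi[OF c.embedding_cut_tree1 assms(2)]
      restr_in_phi[OF c.embedding_cut_tree2 assms(2)] by blast+
qed

lemma supp_rho_gen:
  assumes "is_rtree T" "s \<in> phi T"
  shows "finite (supp (rho_gen phi phimap T s :: _ \<Rightarrow> 'r::comm_ring_1))"
    "supp (rho_gen phi phimap T s :: _ \<Rightarrow> 'r) \<subseteq> rclasses phi phimap \<times> rclasses phi phimap"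
proof -
  have "supp (rho_gen phi phimap T s :: _ \<Rightarrow> 'r)
      \<subseteq> (\<Union>e\<in>edges T. supp (delta (branch_class T s e, trunk_class T s e) :: _ \<Rightarrow> 'r))"
    using supp_sum_subset[of "\<lambda>e. delta (branch_class T s e, trunk_class T s e)" "edges T"]
    unfolding rho_gen_eq_sum sum_apply by simp
  also have "\<dots> \<subseteq> (\<lambda>e. (branch_class T s e, trunk_class T s e)) ` edges T"
    using supp_delta_subset by (intro UN_least) fastforce
  finally have sub: "supp (rho_gen phi phimap T s :: _ \<Rightarrow> 'r)
      \<subseteq> (\<lambda>e. (branch_class T s e, trunk_class T s e)) ` edges T" .
  then show "finite (supp (rho_gen phi phimap T s :: _ \<Rightarrow> 'r))"
    by (rule finite_subset) (simp add: finite_edges[OF assms(1)])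
  show "supp (rho_gen phi phimap T s :: _ \<Rightarrow> 'r) \<subseteq> rclasses phi phimap \<times> rclasses phi phimap"
    using sub cut_classes_in_rclasses[OF assms] by blast
qed

lemma rho_tree_delta_in_free_mod:
  assumes "C \<in> rclasses phi phimap"
  shows "(rho_tree phi phimap (delta C) :: _ \<Rightarrow> 'r::comm_ring_1) \<in> free_mod (rclasses phi phimap \<times> rclasses phi phimap)"
proof -
  obtain T s where Ts: "is_rtree T" "s \<in> phi T" "C = rclass phi phimap T s"
    using assms unfolding rclasses_def by blast
  show ?thesis unfolding Ts(3) rho_tree_delta[OF Ts(1,2)]
    using supp_rho_gen[OF Ts(1,2)] by (simp add: free_mod_def supp_def)
qed

lemma branch_class_restr:
  assumes "edge_cut T' f" "embedding T' T id" "s \<in> phi T"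
  shows "branch_class T' (restr phimap T T' s) f
    = rclass phi phimap (cut_tree1 T' f) (restr phimap T (cut_tree1 T' f) s)"
  unfolding branch_class_def restr_restr[OF edge_cut.embedding_cut_tree1[OF assms(1)] assms(2,3)] ..

lemma trunk_class_restr:
  assumes "edge_cut T' f" "embedding T' T id" "s \<in> phi T"
  shows "trunk_class T' (restr phimap T T' s) f
    = rclass phi phimap (cut_tree2 T' f) (restr phimap T (cut_tree2 T' f) s)"
  unfolding trunk_class_def restr_restr[OF edge_cut.embedding_cut_tree2[OF assms(1)] assms(2,3)] ..

end

section \<open>The coassociator on one tree\<close>

locale phi_tree = tree_structure phi phimap for phi :: "rtree \<Rightarrow> 'a set" and phimap +
  fixes T :: rtree and s :: 'a
  assumes rt: "is_rtree T" and sT: "s \<in> phi T"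
begin

text \<open>For f below e, middle_class e f is the class of the piece between f and e; for
  incomparable e and f, stump_class e f is the class of what remains after cutting off both
  branches.\<close>

definition middle_class :: "nat set \<Rightarrow> nat set \<Rightarrow> (rtree \<times> 'a) set" where
  "middle_class e f =
    rclass phi phimap (cut_tree2 (cut_tree1 T e) f) (restr phimap T (cut_tree2 (cut_tree1 T e) f) s)"

definition stump_class :: "nat set \<Rightarrow> nat set \<Rightarrow> (rtree \<times> 'a) set" where
  "stump_class e f =
    rclass phi phimap (cut_tree2 (cut_tree2 T e) f) (restr phimap T (cut_tree2 (cut_tree2 T e) f) s)"

definition below_pairs :: "(nat set \<times> nat set) set" where
  "below_pairs = Sigma (edges T) (\<lambda>e. edges (cut_tree1 T e))"

definition above_pairs :: "(nat set \<times> nat set) set" where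
  "above_pairs = {(e, f) \<in> Sigma (edges T) (\<lambda>e. edges (cut_tree2 T e)). e \<subseteq> cut_verts1 T f}"

definition incomparable_pairs :: "(nat set \<times> nat set) set" where
  "incomparable_pairs = {(e, f) \<in> Sigma (edges T) (\<lambda>e. edges (cut_tree2 T e)). e \<subseteq> cut_verts2 T f}"

definition nested_term :: "nat set \<Rightarrow> nat set \<Rightarrow> _ \<Rightarrow> 'r::comm_ring_1" where
  "nested_term e f = delta (branch_class T s f, middle_class e f, trunk_class T s e)"

definition disjoint_term :: "nat set \<Rightarrow> nat set \<Rightarrow> _ \<Rightarrow> 'r::comm_ring_1" where
  "disjoint_term e f = delta (branch_class T s e, branch_class T s f, stump_class e f)"

lemma edge_cut_edge: "e \<in> edges T \<Longrightarrow> edge_cut T e"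
  using rt by unfold_locales

lemma edges_cut_tree [simp]:
  assumes "e \<in> edges T"
  shows "edges (cut_tree1 T e) = {g \<in> edges T - {e}. g \<subseteq> cut_verts1 T e}"
    "edges (cut_tree2 T e) = {g \<in> edges T - {e}. g \<subseteq> cut_verts2 T e}"
  using edge_cut.edges_cut_tree1[OF edge_cut_edge[OF assms]]
    edge_cut.edges_cut_tree2[OF edge_cut_edge[OF assms]] by simp_all

lemma finite_pairs: "finite below_pairs" "finite above_pairs" "finite incomparable_pairs"
proof -
  have "below_pairs \<subseteq> edges T \<times> edges T" "above_pairs \<subseteq> edges T \<times> edges T"
    "incomparable_pairs \<subseteq> edges T \<times> edges T"
    unfolding below_pairs_def above_pairs_def incomparable_pairs_def by auto
  then show "finite below_pairs" "finite above_pairs" "finite incomparable_pairs"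
    using finite_edges[OF rt] finite_subset by blast+
qed

lemma trunk_pairs_split:
  "Sigma (edges T) (\<lambda>e. edges (cut_tree2 T e)) = above_pairs \<union> incomparable_pairs"
  "above_pairs \<inter> incomparable_pairs = {}"
proof -
  have "e \<subseteq> cut_verts1 T f \<or> e \<subseteq> cut_verts2 T f"
    if "(e, f) \<in> Sigma (edges T) (\<lambda>e. edges (cut_tree2 T e))" for e f
  proof -
    from that have "e \<in> edges T" "f \<in> edges T" "e \<noteq> f" by auto
    then show ?thesis using edge_cut.edge_subset_side[OF edge_cut_edge] by blast
  qed
  then show "Sigma (edges T) (\<lambda>e. edges (cut_tree2 T e)) = above_pairs \<union> incomparable_pairs"
    unfolding above_pairs_def incomparable_pairs_def by fast
  have "\<not> (e \<subseteq> cut_verts1 T f \<and> e \<subseteq> cut_verts2 T f)" if "e \<in> edges T" for e f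
    using that edge_nonempty[OF rt] cut_verts_disjoint[of T f] by blast
  then show "above_pairs \<inter> incomparable_pairs = {}"
    unfolding above_pairs_def incomparable_pairs_def by fast
qed

lemma swap_above_pairs: "prod.swap ` above_pairs = below_pairs"
proof -
  have "(e, f) \<in> above_pairs \<longleftrightarrow> (f, e) \<in> below_pairs" for e f
  proof
    assume "(f, e) \<in> below_pairs"
    then have fe: "f \<in> edges T" "e \<in> edges T" "e \<subseteq> cut_verts1 T f"
      unfolding below_pairs_def by auto
    interpret edge_pair T f e using fe(1,2) rt by unfold_locales
    show "(e, f) \<in> above_pairs"
      using fe edge_subset_V2_if_below[OF fe(3)] ce.edge_not_subset_V1 unfolding above_pairs_def by auto
  qed (auto simp: above_pairs_def below_pairs_def)
  then show ?thesis by force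
qed

lemma swap_incomparable_pairs: "prod.swap ` incomparable_pairs = incomparable_pairs"
proof -
  have "(e, f) \<in> incomparable_pairs \<Longrightarrow> (f, e) \<in> incomparable_pairs" for e f
    unfolding incomparable_pairs_def by auto
  then show ?thesis by force
qed

lemma below_pair_classes:
  assumes "(e, f) \<in> below_pairs"
  shows "branch_class (cut_tree1 T e) (restr phimap T (cut_tree1 T e) s) f = branch_class T s f"
    "trunk_class (cut_tree1 T e) (restr phimap T (cut_tree1 T e) s) f = middle_class e f"
proof -
  have ef: "e \<in> edges T" "f \<in> edges T" "f \<subseteq> cut_verts1 T e" using assms unfolding below_pairs_def by auto
  interpret edge_pair T e f using ef(1,2) rt by unfold_locales
  have cut: "edge_cut (cut_tree1 T e) f" by (rule ce.edge_cut_cut_tree1[OF ef(2,3)])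
  show "branch_class (cut_tree1 T e) (restr phimap T (cut_tree1 T e) s) f = branch_class T s f"
    unfolding branch_class_restr[OF cut ce.embedding_cut_tree1 sT]
    by (simp only: cut_tree1_cut_tree1[OF ef(3)] branch_class_def)
  show "trunk_class (cut_tree1 T e) (restr phimap T (cut_tree1 T e) s) f = middle_class e f"
    unfolding trunk_class_restr[OF cut ce.embedding_cut_tree1 sT] middle_class_def ..
qed

lemma above_pair_classes:
  assumes "(e, f) \<in> above_pairs"
  shows "branch_class (cut_tree2 T e) (restr phimap T (cut_tree2 T e) s) f = middle_class f e"
    "trunk_class (cut_tree2 T e) (restr phimap T (cut_tree2 T e) s) f = trunk_class T s f"
proof -
  have ef: "e \<in> edges T" "f \<in> edges T" "f \<subseteq> cut_verts2 T e" "e \<subseteq> cut_verts1 T f"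
    using assms unfolding above_pairs_def by auto
  interpret edge_pair T f e using ef(1,2) rt by unfold_locales
  have cut: "edge_cut (cut_tree2 T e) f" by (rule cf.edge_cut_cut_tree2[OF ef(2,3)])
  show "branch_class (cut_tree2 T e) (restr phimap T (cut_tree2 T e) s) f = middle_class f e"
    unfolding branch_class_restr[OF cut cf.embedding_cut_tree2 sT]
    by (simp only: cut_tree2_cut_tree1[OF ef(4)] middle_class_def)
  show "trunk_class (cut_tree2 T e) (restr phimap T (cut_tree2 T e) s) f = trunk_class T s f"
    unfolding trunk_class_restr[OF cut cf.embedding_cut_tree2 sT]
    by (simp only: cut_tree2_cut_tree2_if_below[OF ef(4)] trunk_class_def)
qed

lemma incomparable_pair_classes:
  assumes "(e, f) \<in> incomparable_pairs"
  shows "branch_class (cut_tree2 T e) (restr phimap T (cut_tree2 T e) s) f = branch_class T s f"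
    "trunk_class (cut_tree2 T e) (restr phimap T (cut_tree2 T e) s) f = stump_class e f"
proof -
  have ef: "e \<in> edges T" "f \<in> edges T" "f \<subseteq> cut_verts2 T e" "e \<subseteq> cut_verts2 T f"
    using assms unfolding incomparable_pairs_def by auto
  interpret edge_pair T e f using ef(1,2) rt by unfold_locales
  have cut: "edge_cut (cut_tree2 T e) f" by (rule ce.edge_cut_cut_tree2[OF ef(2,3)])
  show "branch_class (cut_tree2 T e) (restr phimap T (cut_tree2 T e) s) f = branch_class T s f"
    unfolding branch_class_restr[OF cut ce.embedding_cut_tree2 sT]
    by (simp only: cut_tree1_cut_tree2[OF ef(4,3)] branch_class_def)
  show "trunk_class (cut_tree2 T e) (restr phimap T (cut_tree2 T e) s) f = stump_class e f"
    unfolding trunk_class_restr[OF cut ce.embedding_cut_tree2 sT] stump_class_def ..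
qed

lemma stump_class_commute: "(e, f) \<in> incomparable_pairs \<Longrightarrow> stump_class e f = stump_class f e"
  unfolding incomparable_pairs_def stump_class_def
  using cut_tree2_cut_tree2_commute[OF edge_cut_edge edge_cut_edge] by auto

lemma rho_tree_cut_classes:
  assumes "e \<in> edges T"
  shows "(rho_tree phi phimap (delta (branch_class T s e)) :: _ \<Rightarrow> 'r::comm_ring_1)
      = rho_gen phi phimap (cut_tree1 T e) (restr phimap T (cut_tree1 T e) s)"
    "(rho_tree phi phimap (delta (trunk_class T s e)) :: _ \<Rightarrow> 'r::comm_ring_1)
      = rho_gen phi phimap (cut_tree2 T e) (restr phimap T (cut_tree2 T e) s)"
proof -
  interpret c: edge_cut T e using rt assms by unfold_locales
  show "(rho_tree phi phimap (delta (branch_class T s e)) :: _ \<Rightarrow> 'r)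
      = rho_gen phi phimap (cut_tree1 T e) (restr phimap T (cut_tree1 T e) s)"
    unfolding branch_class_def
    by (rule rho_tree_delta[OF c.is_rtree_cut_tree1 restr_in_phi[OF c.embedding_cut_tree1 sT]])
  show "(rho_tree phi phimap (delta (trunk_class T s e)) :: _ \<Rightarrow> 'r)
      = rho_gen phi phimap (cut_tree2 T e) (restr phimap T (cut_tree2 T e) s)"
    unfolding trunk_class_def
    by (rule rho_tree_delta[OF c.is_rtree_cut_tree2 restr_in_phi[OF c.embedding_cut_tree2 sT]])
qed

lemma tens_left_rho_gen:
  "(tens_left (rho_tree phi phimap) (rho_gen phi phimap T s) :: _ \<Rightarrow> 'r::comm_ring_1)
    = (\<Sum>(e, f)\<in>below_pairs. nested_term e f)"
proof -
  have "(tens_left (rho_tree phi phimap) (rho_gen phi phimap T s) :: _ \<Rightarrow> 'r)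
    = (\<Sum>e\<in>edges T. lin (\<lambda>(c1, c2). delta (c1, c2, trunk_class T s e))
          (rho_tree phi phimap (delta (branch_class T s e))))"
    unfolding tens_left_def lin_rho_gen[OF rt] by simp
  also have "\<dots> = (\<Sum>e\<in>edges T. \<Sum>f\<in>edges (cut_tree1 T e). nested_term e f)"
  proof (rule sum.cong[OF refl])
    fix e assume e: "e \<in> edges T"
    interpret c: edge_cut T e using rt e by unfold_locales
    show "lin (\<lambda>(c1, c2). delta (c1, c2, trunk_class T s e)) (rho_tree phi phimap (delta (branch_class T s e)))
      = (\<Sum>f\<in>edges (cut_tree1 T e). nested_term e f :: _ \<Rightarrow> 'r)"
      unfolding rho_tree_cut_classes(1)[OF e] lin_rho_gen[OF c.is_rtree_cut_tree1]
      using below_pair_classes e by (intro sum.cong refl) (simp add: below_pairs_def nested_term_def)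
  qed
  also have "\<dots> = (\<Sum>(e, f)\<in>below_pairs. nested_term e f)"
    unfolding below_pairs_def
    by (rule sum.Sigma) (auto simp: finite_edges[OF rt] edge_cut.is_rtree_cut_tree1[OF edge_cut_edge]
        finite_edges simp del: edges_cut_tree)
  finally show ?thesis .
qed

lemma tens_right_rho_gen:
  "(tens_right (rho_tree phi phimap) (rho_gen phi phimap T s) :: _ \<Rightarrow> 'r::comm_ring_1)
    = (\<Sum>(e, f)\<in>below_pairs. nested_term e f) + (\<Sum>(e, f)\<in>incomparable_pairs. disjoint_term e f)"
proof -
  define cut_term :: "nat set \<Rightarrow> nat set \<Rightarrow> _ \<Rightarrow> 'r" where
    "cut_term e f = delta (branch_class T s e,
       branch_class (cut_tree2 T e) (restr phimap T (cut_tree2 T e) s) f,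
       trunk_class (cut_tree2 T e) (restr phimap T (cut_tree2 T e) s) f)" for e f
  have "(tens_right (rho_tree phi phimap) (rho_gen phi phimap T s) :: _ \<Rightarrow> 'r)
    = (\<Sum>e\<in>edges T. lin (\<lambda>(d1, d2). delta (branch_class T s e, d1, d2))
          (rho_tree phi phimap (delta (trunk_class T s e))))"
    unfolding tens_right_def lin_rho_gen[OF rt] by simp
  also have "\<dots> = (\<Sum>e\<in>edges T. \<Sum>f\<in>edges (cut_tree2 T e). cut_term e f)"
  proof (rule sum.cong[OF refl])
    fix e assume e: "e \<in> edges T"
    interpret c: edge_cut T e using rt e by unfold_locales
    show "lin (\<lambda>(d1, d2). delta (branch_class T s e, d1, d2)) (rho_tree phi phimap (delta (trunk_class T s e)))
      = (\<Sum>f\<in>edges (cut_tree2 T e). cut_term e f)"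
      unfolding rho_tree_cut_classes(2)[OF e] lin_rho_gen[OF c.is_rtree_cut_tree2] cut_term_def by simp
  qed
  also have "\<dots> = (\<Sum>(e, f)\<in>above_pairs \<union> incomparable_pairs. cut_term e f)"
    unfolding trunk_pairs_split(1)[symmetric]
    by (rule sum.Sigma) (auto simp: finite_edges[OF rt] edge_cut.is_rtree_cut_tree2[OF edge_cut_edge]
        finite_edges simp del: edges_cut_tree)
  also have "\<dots> = (\<Sum>(e, f)\<in>above_pairs. cut_term e f) + (\<Sum>(e, f)\<in>incomparable_pairs. cut_term e f)"
    using finite_pairs(2,3) trunk_pairs_split(2) by (rule sum.union_disjoint)
  also have "(\<Sum>(e, f)\<in>above_pairs. cut_term e f) = (\<Sum>(e, f)\<in>above_pairs. nested_term f e)"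
    using above_pair_classes by (intro sum.cong refl) (auto simp: cut_term_def nested_term_def)
  also have "\<dots> = (\<Sum>(e, f)\<in>below_pairs. nested_term e f)"
    unfolding swap_above_pairs[symmetric] by (subst sum.reindex) (auto simp: inj_on_def)
  also have "(\<Sum>(e, f)\<in>incomparable_pairs. cut_term e f) = (\<Sum>(e, f)\<in>incomparable_pairs. disjoint_term e f)"
    using incomparable_pair_classes by (intro sum.cong refl) (auto simp: cut_term_def disjoint_term_def)
  finally show ?thesis .
qed

lemma coassociator_eq:
  "(tens_left (rho_tree phi phimap) (rho_gen phi phimap T s)
      - tens_right (rho_tree phi phimap) (rho_gen phi phimap T s) :: _ \<Rightarrow> 'r::comm_ring_1)
    = - (\<Sum>(e, f)\<in>incomparable_pairs. disjoint_term e f)"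
  unfolding tens_left_rho_gen tens_right_rho_gen by simp

lemma P12_sum_disjoint_terms:
  "P12 (\<Sum>(e, f)\<in>incomparable_pairs. disjoint_term e f :: _ \<Rightarrow> 'r::comm_ring_1)
    = (\<Sum>(e, f)\<in>incomparable_pairs. disjoint_term e f)"
proof -
  have "P12 (\<Sum>(e, f)\<in>incomparable_pairs. disjoint_term e f :: _ \<Rightarrow> 'r)
      = (\<Sum>p\<in>incomparable_pairs. P12 (case_prod disjoint_term p))"
    unfolding P12_def
    by (rule lin_sum) (auto simp: finite_pairs disjoint_term_def finite_supp_delta)
  also have "\<dots> = (\<Sum>(e, f)\<in>incomparable_pairs. disjoint_term f e)"
  proof (rule sum.cong[OF refl], clarify)
    fix e f assume "(e, f) \<in> incomparable_pairs"
    then have "stump_class e f = stump_class f e" by (rule stump_class_commute)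
    then show "P12 (disjoint_term e f :: _ \<Rightarrow> 'r) = disjoint_term f e"
      unfolding P12_def disjoint_term_def lin_delta by simp
  qed
  also have "\<dots> = (\<Sum>(e, f)\<in>incomparable_pairs. disjoint_term e f)"
    by (subst (2) swap_incomparable_pairs[symmetric], subst sum.reindex) (auto simp: inj_on_def)
  finally show ?thesis .
qed

lemma coassociator_P12:
  defines "W \<equiv> (tens_left (rho_tree phi phimap) (rho_gen phi phimap T s)
      - tens_right (rho_tree phi phimap) (rho_gen phi phimap T s) :: _ \<Rightarrow> 'r::comm_ring_1)"
  shows "P12 W = W" "finite (supp W)"
proof -
  show "P12 W = W" unfolding W_def coassociator_eq P12_def lin_uminus
    using P12_sum_disjoint_terms unfolding P12_def by simp
  have "supp W \<subseteq> (\<Union>p\<in>incomparable_pairs. supp (case_prod disjoint_term p :: _ \<Rightarrow> 'r))"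
    using supp_sum_subset[of "case_prod disjoint_term" incomparable_pairs]
    unfolding W_def coassociator_eq by (simp add: supp_def sum_apply)
  moreover have "finite (\<Union>p\<in>incomparable_pairs. supp (case_prod disjoint_term p :: _ \<Rightarrow> 'r))"
    using finite_pairs(3) by (auto simp: disjoint_term_def finite_supp_delta)
  ultimately show "finite (supp W)" by (rule finite_subset)
qed

end

section \<open>The pre-Lie identity\<close>

context tree_structure
begin

lemma coassociator_delta_P12:
  assumes "C \<in> rclasses phi phimap"
  defines "W \<equiv> (tens_left (rho_tree phi phimap) (rho_tree phi phimap (delta C))
      - tens_right (rho_tree phi phimap) (rho_tree phi phimap (delta C)) :: _ \<Rightarrow> 'r::comm_ring_1)"
  shows "P12 W = W" "finite (supp W)"
proof -
  obtain T s where Ts: "is_rtree T" "s \<in> phi T" "C = rclass phi phimap T s"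
    using assms(1) unfolding rclasses_def by blast
  interpret phi_tree phi phimap T s using Ts(1,2) by unfold_locales
  show "P12 W = W" "finite (supp W)"
    unfolding W_def Ts(3) rho_tree_delta[OF Ts(1,2)] using coassociator_P12 by simp_all
qed

lemma rho_tree_linear:
  assumes "x \<in> free_mod B" "y \<in> free_mod B"
  shows "(rho_tree phi phimap (\<lambda>i. a * x i + b * y i) :: _ \<Rightarrow> 'r::comm_ring_1)
    = (\<lambda>p. a * rho_tree phi phimap x p + b * rho_tree phi phimap y p)"
proof -
  have "finite (supp x)" "finite (supp y)" using assms by (simp_all add: free_mod_def supp_def)
  then show ?thesis unfolding rho_tree_lin[of "\<lambda>i. a * x i + b * y i"] rho_tree_lin[of x] rho_tree_lin[of y]
    by (rule lin_add)
qed

lemma rho_tree_in_free_mod: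
  assumes "x \<in> free_mod (rclasses phi phimap)"
  shows "(rho_tree phi phimap x :: _ \<Rightarrow> 'r::comm_ring_1) \<in> free_mod (rclasses phi phimap \<times> rclasses phi phimap)"
proof -
  let ?U = "\<Union>C\<in>supp x. supp (rho_tree phi phimap (delta C) :: _ \<Rightarrow> 'r)"
  have x: "finite (supp x)" "supp x \<subseteq> rclasses phi phimap" using assms by (auto simp: free_mod_def supp_def)
  have "supp (rho_tree phi phimap x :: _ \<Rightarrow> 'r) \<subseteq> ?U"
    unfolding rho_tree_lin[of x] by (rule supp_lin_subset)
  moreover have "finite ?U" "?U \<subseteq> rclasses phi phimap \<times> rclasses phi phimap"
    using x rho_tree_delta_in_free_mod unfolding free_mod_def supp_def by blast+
  ultimately have "finite (supp (rho_tree phi phimap x :: _ \<Rightarrow> 'r))"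
    "supp (rho_tree phi phimap x :: _ \<Rightarrow> 'r) \<subseteq> rclasses phi phimap \<times> rclasses phi phimap"
    using finite_subset by blast+
  then show ?thesis unfolding free_mod_def supp_def by blast
qed

lemma coassociator_P12_invariant:
  assumes "x \<in> free_mod (rclasses phi phimap)"
  shows "let z = tens_left (rho_tree phi phimap) (rho_tree phi phimap x)
      - tens_right (rho_tree phi phimap) (rho_tree phi phimap x) in z - P12 z = (0 :: _ \<Rightarrow> 'r::comm_ring_1)"
proof -
  have x: "finite (supp x)" "supp x \<subseteq> rclasses phi phimap" using assms by (auto simp: free_mod_def supp_def)
  define R where "R C = (rho_tree phi phimap (delta C) :: _ \<Rightarrow> 'r)" for C
  define W where "W C = tens_left (rho_tree phi phimap) (R C) - tens_right (rho_tree phi phimap) (R C)" for C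
  have R: "finite (supp (R C))" if "C \<in> supp x" for C
    using that x(2) rho_tree_delta_in_free_mod unfolding R_def free_mod_def supp_def by blast
  have W: "finite (supp (W C))" "P12 (W C) = W C" if "C \<in> supp x" for C
    using that x(2) coassociator_delta_P12 unfolding W_def R_def by blast+
  have rho_x: "rho_tree phi phimap x = (\<lambda>b. \<Sum>C\<in>supp x. x C * R C b)"
    unfolding rho_tree_lin[of x] lin_def R_def supp_def ..
  have "tens_left (rho_tree phi phimap) (rho_tree phi phimap x)
      = (\<lambda>q. \<Sum>C\<in>supp x. x C * tens_left (rho_tree phi phimap) (R C) q)"
    unfolding rho_x tens_left_def[of "rho_tree phi phimap"] by (rule lin_comb[OF x(1) R])
  moreover have "tens_right (rho_tree phi phimap) (rho_tree phi phimap x)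
      = (\<lambda>q. \<Sum>C\<in>supp x. x C * tens_right (rho_tree phi phimap) (R C) q)"
    unfolding rho_x tens_right_def[of "rho_tree phi phimap"] by (rule lin_comb[OF x(1) R])
  ultimately have "tens_left (rho_tree phi phimap) (rho_tree phi phimap x)
      - tens_right (rho_tree phi phimap) (rho_tree phi phimap x) = (\<lambda>q. \<Sum>C\<in>supp x. x C * W C q)"
    unfolding W_def by (simp add: fun_eq_iff sum_subtractf right_diff_distrib)
  moreover have "P12 (\<lambda>q. \<Sum>C\<in>supp x. x C * W C q) = (\<lambda>q. \<Sum>C\<in>supp x. x C * P12 (W C) q)"
    unfolding P12_def by (rule lin_comb[OF x(1) W(1)])
  moreover have "\<dots> = (\<lambda>q. \<Sum>C\<in>supp x. x C * W C q)" using W(2) by (simp add: fun_eq_iff)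
  ultimately show ?thesis by simp
qed

lemma pre_lie_comult_rho_tree:
  "pre_lie_comult (rclasses phi phimap) (rho_tree phi phimap :: _ \<Rightarrow> _ \<Rightarrow> 'r::comm_ring_1)"
  unfolding pre_lie_comult_def
  using rho_tree_linear rho_tree_in_free_mod coassociator_P12_invariant by blast

end

theorem lemma4p2:
  fixes phi :: "rtree \<Rightarrow> 'a set"
    and phimap :: "rtree \<Rightarrow> rtree \<Rightarrow> (nat \<Rightarrow> nat) \<Rightarrow> 'a \<Rightarrow> 'a"
  assumes "rtree_structure phi phimap"
  shows "(\<forall>T s T2 s2. is_rtree T \<and> s \<in> phi T \<and> (T2, s2) \<in> rclass phi phimap T s \<longrightarrow>
            (rho_gen phi phimap T2 s2 :: _ \<Rightarrow> 'r::comm_ring_1) = rho_gen phi phimap T s)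
       \<and> pre_lie_comult (rclasses phi phimap) (rho_tree phi phimap :: _ \<Rightarrow> _ \<Rightarrow> 'r)"
proof -
  interpret tree_structure phi phimap using assms by unfold_locales
  show ?thesis using rho_gen_rclass pre_lie_comult_rho_tree by blast
qed

end
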